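(* Let $\{X_n\}$ be an absorbing random leap on $\{0,\dots,N\}$ with $N\ge k_p+k_q$, let $T=\min\{n\ge0:X_n\in\{0,N\}\}$ and $v_i=E(T\mid X_0=i)$. Then $\det(\mathbf A_N\mathbf Z)\ne 0$ and \[ v_i=\frac{\det(\mathbf A^\star_i\mathbf Z^\star)}{\det(\mathbf A_N\mathbf Z)}\qquad\text{for every } i\in\{0,\dots,N\}. \]
   Context: Fix an integer $k\ge1$ and nonnegative reals $p_1,\dots,p_k,q_1,\dots,q_k$ with $\sum_{j=1}^k(p_j+q_j)=1$, $\sum_{j=1}^k p_j>0$ and $\sum_{j=1}^k q_j>0$. Let $k_p=\max\{j:p_j>0\}$ and $k_q=\max\{j:q_j>0\}$. Let $\xi$ be a random variable with $P(\xi=\ell)=p_\ell$ and $P(\xi=-\ell)=q_\ell$ for $1\le\ell\le k$. For an integer $N\ge k_p+k_q$, the absorbing random leap is the Markov chain on $\{0,\dots,N\}$ in which $0$ and $N$ are absorbing and, for $0<i<N$: $P(i\to j)=P(i+\xi=j)$ for $1\le j\le N-1$, $P(i\to0)=P(i+\xi\le0)$, $P(i\to N)=P(i+\xi\ge N)$. Characteristic polynomial: $\chi(z)=\sum_{j=0}^{2k-1}c_jz^j$ where $c_j=-\sum_{\ell=k-j}^k q_\ell$ for $0\le j\le k-1$ and $c_j=\sum_{\ell=j-k+1}^k p_\ell$ for $k\le j\le 2k-1$. Counted with multiplicity, $\chi$ has exactly $r:=k_p+k_q-1$ nonzero roots; let $z_1,\dots,z_s$ be the distinct nonzero roots with multiplicities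 $r_1,\dots,r_s$. For each $j$ let $\mathbf Z^{(j)}$ be the $(N+r-1)\times r_j$ matrix with entries $Z^{(j)}_{i,\ell}=(i+1-k_q)^{\ell-1}z_j^{\,i+1-k_q}$ ($1\le i\le N+r-1$), with $0^0=1$, and $\mathbf Z=(\mathbf Z^{(1)}\ \cdots\ \mathbf Z^{(s)})$. Accordion matrix: for $i\in\{0,\dots,N\}$, $\mathbf A_i=\begin{pmatrix}I_{k_q-1}&0&0&0\\0&\mathbf 1_i^T&\mathbf 0_{N-i}^T&0\\0&0&0&I_{k_p-1}\end{pmatrix}$, an $r\times(N+r-1)$ matrix (column blocks of widths $k_q-1,i,N-i,k_p-1$). Extended accordion matrix: $\mathbf A^\star_i$ is the $(r+1)\times(N+r-1)$ matrix obtained by appending to $\mathbf A_N$ the $k_q$-th row of $\mathbf A_i$ (the row with ones in columns $k_q,\dots,k_q+i-1$ and zeros elsewhere) as a last row. Let $\mu=\sum_{j=1}^k j(p_j-q_j)$ and $\sigma^2=\sum_{j=1}^k j^2(p_j+q_j)-\mu^2$. Let $\boldsymbol\delta=(\delta_{2-k_q},\delta_{3-k_q},\dots,\delta_{N+k_p-1})^T$ (length $N+r-1$) with $\delta_i=-1/\mu$ if $\mu\ne0$ and $\delta_i=-2i/\sigma^2$ if $\mu=0$. Let $\mathbf Z^\star=(\mathbf Z\ \ \boldsymbol\delta)$, an $(N+r-1)\times(r+1)$ matrix. *)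

theory Defs
  imports "HOL-Probability.Probability_Mass_Function" "Jordan_Normal_Form.Determinant"
    "HOL-Computational_Algebra.Polynomial"
begin

(* Vectors p, q : nat => real, only indices 1..k are used. *)

definition kp :: "nat \<Rightarrow> (nat \<Rightarrow> real) \<Rightarrow> nat" where
  "kp k p = Max {j. 1 \<le> j \<and> j \<le> k \<and> p j > 0}"

definition kq :: "nat \<Rightarrow> (nat \<Rightarrow> real) \<Rightarrow> nat" where
  "kq k q = Max {j. 1 \<le> j \<and> j \<le> k \<and> q j > 0}"

definition xi_pmf :: "nat \<Rightarrow> (nat \<Rightarrow> real) \<Rightarrow> (nat \<Rightarrow> real) \<Rightarrow> int pmf" where
  "xi_pmf k p q = embed_pmf (\<lambda>x::int.
     if 1 \<le> x \<and> x \<le> int k then p (nat x)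
     else if - int k \<le> x \<and> x \<le> -1 then q (nat (- x)) else 0)"

definition clampN :: "nat \<Rightarrow> int \<Rightarrow> nat" where
  "clampN N x = (if x \<le> 0 then 0 else if x \<ge> int N then N else nat x)"

definition leap_step :: "nat \<Rightarrow> (nat \<Rightarrow> real) \<Rightarrow> (nat \<Rightarrow> real) \<Rightarrow> nat \<Rightarrow> nat \<Rightarrow> nat pmf" where
  "leap_step k p q N i =
     (if 0 < i \<and> i < N then map_pmf (\<lambda>x. clampN N (int i + x)) (xi_pmf k p q)
      else return_pmf i)"

primrec leap_paths :: "nat \<Rightarrow> (nat \<Rightarrow> real) \<Rightarrow> (nat \<Rightarrow> real) \<Rightarrow> nat \<Rightarrow> nat \<Rightarrow> nat \<Rightarrow> nat list pmf" where
  "leap_paths k p q N i 0 = return_pmf [i]"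
| "leap_paths k p q N i (Suc n) =
     bind_pmf (leap_paths k p q N i n)
       (\<lambda>xs. map_pmf (\<lambda>j. xs @ [j]) (leap_step k p q N (last xs)))"

(* P(T > n | X_0 = i) = P(X_0,...,X_n all outside {0,N} | X_0 = i) *)
definition tail_prob :: "nat \<Rightarrow> (nat \<Rightarrow> real) \<Rightarrow> (nat \<Rightarrow> real) \<Rightarrow> nat \<Rightarrow> nat \<Rightarrow> nat \<Rightarrow> real" where
  "tail_prob k p q N i n =
     measure_pmf.prob (leap_paths k p q N i n) {xs. \<forall>x\<in>set xs. x \<noteq> 0 \<and> x \<noteq> N}"

(* E(T | X_0 = i) = sum_{n>=0} P(T > n | X_0 = i), as an extended nonnegative real *)
definition expected_absorption :: "nat \<Rightarrow> (nat \<Rightarrow> real) \<Rightarrow> (nat \<Rightarrow> real) \<Rightarrow> nat \<Rightarrow> nat \<Rightarrow> ennreal" where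
  "expected_absorption k p q N i = (\<Sum>n. ennreal (tail_prob k p q N i n))"

definition chi_coeff :: "nat \<Rightarrow> (nat \<Rightarrow> real) \<Rightarrow> (nat \<Rightarrow> real) \<Rightarrow> nat \<Rightarrow> real" where
  "chi_coeff k p q j =
     (if j < k then - (\<Sum>l = k - j..k. q l)
      else if j < 2 * k then (\<Sum>l = j + 1 - k..k. p l) else 0)"

definition chi :: "nat \<Rightarrow> (nat \<Rightarrow> real) \<Rightarrow> (nat \<Rightarrow> real) \<Rightarrow> complex poly" where
  "chi k p q = Poly (map (\<lambda>j. complex_of_real (chi_coeff k p q j)) [0..<2 * k])"

definition Z_cols :: "complex poly \<Rightarrow> complex list \<Rightarrow> (complex \<times> nat) list" where
  "Z_cols P zs = concat (map (\<lambda>z. map (\<lambda>l. (z, l)) [1..<order z P + 1]) zs)"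

(* Z: (N+r-1) x (sum r_j); 0-based row t is the paper's row i = t+1,
   entry (i+1-kq)^(l-1) * z^(i+1-kq) *)
definition Zmat :: "nat \<Rightarrow> nat \<Rightarrow> nat \<Rightarrow> complex poly \<Rightarrow> complex list \<Rightarrow> complex mat" where
  "Zmat N r kqv P zs = mat (N + r - 1) (length (Z_cols P zs))
     (\<lambda>(t, c). let (z, l) = Z_cols P zs ! c; e = int t + 2 - int kqv
               in of_int e ^ (l - 1) * z powi e)"

definition accordion :: "nat \<Rightarrow> nat \<Rightarrow> nat \<Rightarrow> nat \<Rightarrow> complex mat" where
  "accordion N kpv kqv i = mat (kpv + kqv - 1) (N + kpv + kqv - 2)
     (\<lambda>(a, c). if a < kqv - 1 then (if c = a then 1 else 0)
               else if a = kqv - 1 then (if kqv - 1 \<le> c \<and> c < kqv - 1 + i then 1 else 0)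
               else (if c = kqv - 1 + N + (a - kqv) then 1 else 0))"

definition accordion_ext :: "nat \<Rightarrow> nat \<Rightarrow> nat \<Rightarrow> nat \<Rightarrow> complex mat" where
  "accordion_ext N kpv kqv i = mat (kpv + kqv) (N + kpv + kqv - 2)
     (\<lambda>(a, c). if a < kpv + kqv - 1 then accordion N kpv kqv N $$ (a, c)
               else accordion N kpv kqv i $$ (kqv - 1, c))"

definition drift :: "nat \<Rightarrow> (nat \<Rightarrow> real) \<Rightarrow> (nat \<Rightarrow> real) \<Rightarrow> real" where
  "drift k p q = (\<Sum>j = 1..k. real j * (p j - q j))"

definition variance_xi :: "nat \<Rightarrow> (nat \<Rightarrow> real) \<Rightarrow> (nat \<Rightarrow> real) \<Rightarrow> real" where
  "variance_xi k p q = (\<Sum>j = 1..k. (real j)\<^sup>2 * (p j + q j)) - (drift k p q)\<^sup>2"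

definition delta_entry :: "real \<Rightarrow> real \<Rightarrow> int \<Rightarrow> complex" where
  "delta_entry \<mu> \<sigma>2 idx = (if \<mu> \<noteq> 0 then complex_of_real (- 1 / \<mu>)
                            else complex_of_real (- 2 * real_of_int idx / \<sigma>2))"

(* Z* = (Z delta); 0-based row t corresponds to delta_{t+2-kq} *)
definition Zstar :: "nat \<Rightarrow> nat \<Rightarrow> nat \<Rightarrow> complex poly \<Rightarrow> complex list \<Rightarrow> real \<Rightarrow> real \<Rightarrow> complex mat" where
  "Zstar N r kqv P zs \<mu> \<sigma>2 = mat (N + r - 1) (length (Z_cols P zs) + 1)
     (\<lambda>(t, c). if c < length (Z_cols P zs) then Zmat N r kqv P zs $$ (t, c)
               else delta_entry \<mu> \<sigma>2 (int t + 2 - int kqv))"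

end

theory Submission
  imports Defs "HOL-Computational_Algebra.Fundamental_Theorem_Algebra"
begin

text \<open>From every state, \<open>N\<close> consecutive jumps of size \<open>k\<^sub>p\<close> lead to \<open>N\<close>, so the tails
  \<open>P(T > n)\<close> decay geometrically and \<open>v\<close> is finite. It solves \<open>v\<^sub>i = 1 + E(v\<^sub>X\<^sub>1 | X\<^sub>0 = i)\<close>
  inside, with \<open>v\<^sub>0 = v\<^sub>N = 0\<close>, and is the only such function because a harmonic function
  vanishing at both ends is bounded by a multiple of \<open>P(T > n) \<rightarrow> 0\<close>.
  Extending \<open>v\<close> constantly outside \<open>[0, N]\<close>, its increments \<open>x\<^sub>e = v\<^sub>e - v\<^sub>e\<^sub>-\<^sub>1\<close> satisfy at each
  interior point the linear recurrence with characteristic polynomial \<open>\<chi>\<close> and right-hand side \<open>-1\<close>,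
  whose solutions on the relevant window of indices are exactly \<open>Z c + \<delta>\<close>. The accordion \<open>A\<^sub>N\<close>
  encodes the boundary conditions: \<open>x\<close> vanishes outside \<open>[1, N]\<close> and sums to \<open>v\<^sub>N - v\<^sub>0 = 0\<close>.
  Uniqueness, together with the injectivity of the confluent Vandermonde matrix \<open>Z\<close>, makes \<open>A\<^sub>N Z\<close>
  invertible, so \<open>c\<close> is determined by \<open>A\<^sub>N Z c = -A\<^sub>N \<delta>\<close>, and \<open>v\<^sub>i = x\<^sub>1 + \<dots> + x\<^sub>i\<close> is read off by
  the extra row of \<open>A\<^sup>\<star>\<^sub>i\<close>. Adding \<open>Z c\<close> to the last column of \<open>Z\<^sup>\<star>\<close> makes \<open>A\<^sup>\<star>\<^sub>i Z\<^sup>\<star>\<close> block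
  triangular with diagonal blocks \<open>A\<^sub>N Z\<close> and \<open>v\<^sub>i\<close>.\<close>

definition poly_moment :: "nat \<Rightarrow> 'a::comm_ring_1 poly \<Rightarrow> 'a \<Rightarrow> 'a \<Rightarrow> nat \<Rightarrow> 'a" where
  "poly_moment n D z s a = (\<Sum>t<n. coeff D t * (of_nat t + s) ^ a * z ^ t)"

lemma poly_moment_shift:
  assumes "\<forall>a<m. poly_moment n D z s a = 0" "a < m"
  shows "poly_moment n D z s' a = 0"
proof -
  have "poly_moment n D z s' a =
      (\<Sum>t<n. coeff D t * (\<Sum>c\<le>a. of_nat (a choose c) * (of_nat t + s) ^ c * (s' - s) ^ (a - c)) * z ^ t)"
    unfolding poly_moment_def
  proof (rule sum.cong[OF refl])
    fix t
    have "of_nat t + s' = (of_nat t + s) + (s' - s)" by simp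
    then show "coeff D t * (of_nat t + s') ^ a * z ^ t =
        coeff D t * (\<Sum>c\<le>a. of_nat (a choose c) * (of_nat t + s) ^ c * (s' - s) ^ (a - c)) * z ^ t"
      by (simp only: binomial_ring)
  qed
  also have "\<dots> = (\<Sum>c\<le>a. of_nat (a choose c) * (s' - s) ^ (a - c) * poly_moment n D z s c)"
    unfolding poly_moment_def sum_distrib_left sum_distrib_right
    by (subst sum.swap) (auto intro!: sum.cong simp: algebra_simps)
  also have "\<dots> = 0" using assms by (intro sum.neutral) auto
  finally show ?thesis .
qed

lemma poly_moment_linear_factor:
  fixes D :: "'a::idom poly"
  assumes D: "D = [:-z, 1:] * E" and n: "degree D < n"
  shows "poly_moment n D z 0 a = z * (\<Sum>c<a. of_nat (a choose c) * poly_moment n E z 0 c)"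
proof -
  obtain n' where n': "n = Suc n'" using n by (cases n) auto
  have D': "D = pCons 0 E - Polynomial.smult z E" using D by (simp add: mult_pCons_left)
  have cE: "coeff E n' = 0"
  proof (cases "E = 0")
    case False
    then have "degree E < n'" using n n' D degree_mult_eq[of "[:-z, 1:]" E] by (simp del: mult_pCons_left)
    then show ?thesis by (simp add: coeff_eq_0)
  qed simp
  have "poly_moment n D z 0 a = (\<Sum>t<n. coeff (pCons 0 E) t * of_nat t ^ a * z ^ t)
                       - z * (\<Sum>t<n. coeff E t * of_nat t ^ a * z ^ t)"
    unfolding poly_moment_def D' by (simp add: sum_subtractf sum_distrib_left algebra_simps)
  also have "(\<Sum>t<n. coeff (pCons 0 E) t * of_nat t ^ a * z ^ t)
      = (\<Sum>t<n. coeff E t * of_nat (Suc t) ^ a * z ^ Suc t)"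
    unfolding n' using cE by (subst sum.lessThan_Suc_shift) simp
  also have "\<dots> - z * (\<Sum>t<n. coeff E t * of_nat t ^ a * z ^ t)
     = z * (\<Sum>t<n. coeff E t * ((of_nat t + 1) ^ a - of_nat t ^ a) * z ^ t)"
    by (simp add: sum_distrib_left sum_subtractf algebra_simps)
  also have "(\<Sum>t<n. coeff E t * ((of_nat t + 1) ^ a - of_nat t ^ a) * z ^ t)
      = (\<Sum>t<n. coeff E t * (\<Sum>c<a. of_nat (a choose c) * of_nat t ^ c) * z ^ t)"
  proof (rule sum.cong[OF refl])
    fix t
    have "(of_nat t + 1 :: 'a) ^ a = (\<Sum>c<a. of_nat (a choose c) * of_nat t ^ c) + of_nat t ^ a"
      by (simp add: binomial_ring[of _ 1] flip: lessThan_Suc_atMost)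
    then show "coeff E t * ((of_nat t + 1) ^ a - of_nat t ^ a) * z ^ t =
        coeff E t * (\<Sum>c<a. of_nat (a choose c) * of_nat t ^ c) * z ^ t" by simp
  qed
  also have "\<dots> = (\<Sum>c<a. of_nat (a choose c) * poly_moment n E z 0 c)"
    unfolding poly_moment_def sum_distrib_left sum_distrib_right
    by (subst sum.swap) (auto intro!: sum.cong simp: algebra_simps)
  finally show ?thesis .
qed

lemma poly_moment_0_eq_poly:
  assumes "degree D < n"
  shows "poly_moment n D z 0 0 = poly D z"
proof -
  have "poly_moment n D z 0 0 = (\<Sum>t<n. coeff D t * z ^ t)" by (simp add: poly_moment_def)
  also have "\<dots> = (\<Sum>t\<le>degree D. coeff D t * z ^ t)"
    using assms by (intro sum.mono_neutral_right) (auto simp: coeff_eq_0)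
  finally show ?thesis by (simp add: poly_altdef)
qed

lemma root_linear_factor:
  fixes D :: "'a::idom poly"
  assumes "D \<noteq> 0" "poly D z = 0"
  obtains E where "D = [:-z, 1:] * E" "E \<noteq> 0" "order z D = Suc (order z E)"
proof -
  obtain E where E: "D = [:-z, 1:] * E" using assms poly_eq_0_iff_dvd by (metis dvdE)
  have "E \<noteq> 0" using E assms by auto
  moreover have "order z D = Suc (order z E)"
    using E assms order_mult[of "[:-z, 1:]" E z] order_power_n_n[of z 1] by simp
  ultimately show ?thesis using E that by blast
qed

lemma poly_moment_eq_0_if_less_order:
  fixes D :: "'a::idom poly"
  assumes "D \<noteq> 0" "degree D < n" "a < order z D"
  shows "poly_moment n D z 0 a = 0"
  using assms
proof (induction "order z D" arbitrary: D a)
  case 0 then show ?case by simp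
next
  case (Suc m)
  have "poly D z = 0" using Suc.prems order_root by fastforce
  then obtain E where E: "D = [:-z, 1:] * E" "E \<noteq> 0" "order z D = Suc (order z E)"
    using root_linear_factor Suc.prems(1) by blast
  have "degree E < n"
    using E Suc.prems degree_mult_eq[of "[:-z, 1:]" E] by (simp del: mult_pCons_left)
  moreover have "m = order z E" using Suc.hyps(2) E(3) by simp
  ultimately have "poly_moment n E z 0 c = 0" if "c < a" for c
    using Suc.hyps(1)[of E c] that E(2) Suc.prems(3) E(3) by simp
  then show ?case
    using poly_moment_linear_factor[OF E(1) Suc.prems(2)] by simp
qed

lemma order_ge_if_poly_moments_eq_0:
  fixes D :: "'a::{idom, ring_char_0} poly"
  assumes "D \<noteq> 0" "z \<noteq> 0" "degree D < n" "\<forall>a<m. poly_moment n D z 0 a = 0"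
  shows "m \<le> order z D"
  using assms
proof (induction m arbitrary: D)
  case 0 then show ?case by simp
next
  case (Suc m)
  have "poly D z = 0" using Suc.prems poly_moment_0_eq_poly by fastforce
  then obtain E where E: "D = [:-z, 1:] * E" "E \<noteq> 0" "order z D = Suc (order z E)"
    using root_linear_factor Suc.prems(1) by blast
  have "poly_moment n E z 0 a = 0" if "a < m" for a
    using that
  proof (induction a rule: less_induct)
    case (less a)
    have "0 = poly_moment n D z 0 (Suc a)" using Suc.prems less by auto
    also have "\<dots> = z * (\<Sum>c<Suc a. of_nat (Suc a choose c) * poly_moment n E z 0 c)"
      using poly_moment_linear_factor E Suc.prems by blast
    also have "\<dots> = z * (of_nat (Suc a) * poly_moment n E z 0 a)"
      using less by (simp add: sum.lessThan_Suc)
    finally show ?case using Suc.prems(2) by (simp del: of_nat_Suc)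
  qed
  moreover have "degree E < n"
    using E Suc.prems degree_mult_eq[of "[:-z, 1:]" E] by (simp del: mult_pCons_left)
  ultimately have "m \<le> order z E" using Suc.IH[of E] E Suc.prems by auto
  then show ?case using E by simp
qed

lemma sum_order_le_degree_subset:
  fixes D :: "'a::idom poly"
  assumes "D \<noteq> 0" "finite A"
  shows "(\<Sum>z\<in>A. order z D) \<le> degree D"
proof -
  have "(\<Sum>z\<in>A. order z D) = (\<Sum>z\<in>A \<inter> {x. poly D x = 0}. order z D)"
    using assms by (intro sum.mono_neutral_right) (auto simp: order_gt_0_iff)
  also have "\<dots> \<le> (\<Sum>z | poly D z = 0. order z D)"
    using assms by (intro sum_mono2) (auto simp: poly_roots_finite order_gt_0_iff)
  also have "\<dots> \<le> degree D" by (rule sum_order_le_degree[OF assms(1)])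
  finally show ?thesis .
qed

text \<open>Injectivity of a confluent Vandermonde matrix: the coefficients \<open>d\<close> form a polynomial of
  degree \<open>< n\<close> having each \<open>z \<in> A\<close> as a root of multiplicity \<open>\<ge> mz z\<close>.\<close>

lemma confluent_vandermonde_kernel:
  fixes d :: "nat \<Rightarrow> 'a::{idom, ring_char_0}"
  assumes A: "finite A" "0 \<notin> A" and n: "(\<Sum>z\<in>A. mz z) = n"
    and h: "\<forall>z\<in>A. \<forall>a<mz z. (\<Sum>t<n. d t * (of_nat t + s) ^ a * z ^ t) = 0"
  shows "\<forall>t<n. d t = 0"
proof -
  define D where "D = (\<Sum>t<n. monom (d t) t)"
  have cD: "coeff D t = (if t < n then d t else 0)" for t
    unfolding D_def coeff_sum coeff_monom by (simp add: sum.delta)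
  show ?thesis
  proof (cases "D = 0")
    case True then show ?thesis using cD by (metis coeff_0)
  next
    case False
    have deg: "degree D < n"
    proof -
      have "n > 0" using False D_def by (cases n) auto
      moreover have "degree D \<le> n - 1" using cD by (intro degree_le) auto
      ultimately show ?thesis by simp
    qed
    have "mz z \<le> order z D" if "z \<in> A" for z
    proof -
      have "poly_moment n D z s a = (\<Sum>t<n. d t * (of_nat t + s) ^ a * z ^ t)" for a
        unfolding poly_moment_def using cD by (intro sum.cong) auto
      then have "\<forall>a<mz z. poly_moment n D z s a = 0" using h that by auto
      then have "\<forall>a<mz z. poly_moment n D z 0 a = 0" using poly_moment_shift by blast
      moreover have "z \<noteq> 0" using that A by auto
      ultimately show ?thesis using order_ge_if_poly_moments_eq_0[OF False _ deg, of z "mz z"] by blast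
    qed
    then have "n \<le> (\<Sum>z\<in>A. order z D)" unfolding n[symmetric] by (rule sum_mono)
    also have "\<dots> \<le> degree D" by (rule sum_order_le_degree_subset[OF False A(1)])
    finally show ?thesis using deg by simp
  qed
qed

lemma sum_order_nonzero_roots:
  fixes D :: "complex poly"
  assumes "D \<noteq> 0"
  shows "(\<Sum>z | z \<noteq> 0 \<and> poly D z = 0. order z D) = degree D - order 0 D"
proof -
  have "degree D = size (proots D)" by (simp add: size_proots_complex)
  also have "\<dots> = (\<Sum>z | poly D z = 0. order z D)"
    using assms by (simp add: size_multiset_overloaded_eq)
  also have "\<dots> = (\<Sum>z | z \<noteq> 0 \<and> poly D z = 0. order z D) + order 0 D"
  proof (cases "poly D 0 = 0")
    case True
    have "{z. poly D z = 0} = insert 0 {z. z \<noteq> 0 \<and> poly D z = 0}" using True by auto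
    then show ?thesis using assms poly_roots_finite[OF assms] by (simp add: sum.insert)
  next
    case False
    then show ?thesis by (auto simp: order_0I intro!: sum.cong)
  qed
  finally show ?thesis by simp
qed

lemma max_positive_index:
  fixes f :: "nat \<Rightarrow> real" and k :: nat
  assumes nn: "\<And>j. 1 \<le> j \<Longrightarrow> j \<le> k \<Longrightarrow> f j \<ge> 0" and pos: "(\<Sum>j = 1..k. f j) > 0"
  defines "m \<equiv> Max {j. 1 \<le> j \<and> j \<le> k \<and> f j > 0}"
  shows "1 \<le> m" "m \<le> k" "f m > 0" "\<And>l. m < l \<Longrightarrow> l \<le> k \<Longrightarrow> f l = 0"
proof -
  let ?S = "{j. 1 \<le> j \<and> j \<le> k \<and> f j > 0}"
  have fin: "finite ?S" by (rule finite_subset[of _ "{1..k}"]) auto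
  have ne: "?S \<noteq> {}"
  proof
    assume "?S = {}"
    then have "\<forall>j\<in>{1..k}. f j \<le> 0" by auto
    then have "(\<Sum>j = 1..k. f j) \<le> 0" by (intro sum_nonpos) auto
    with pos show False by simp
  qed
  have "m \<in> ?S" unfolding m_def using fin ne by (rule Max_in)
  then show "1 \<le> m" "m \<le> k" "f m > 0" by auto
  fix l assume "m < l" "l \<le> k"
  have "f l \<le> 0"
  proof (rule ccontr)
    assume "\<not> f l \<le> 0"
    then have "l \<in> ?S" using \<open>m < l\<close> \<open>l \<le> k\<close> by auto
    then have "l \<le> m" unfolding m_def by (rule Max_ge[OF fin])
    with \<open>m < l\<close> show False by simp
  qed
  moreover have "f l \<ge> 0" using nn \<open>m < l\<close> \<open>l \<le> k\<close> by simp
  ultimately show "f l = 0" by simp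
qed

locale random_leap =
  fixes k :: nat and p q :: "nat \<Rightarrow> real"
  assumes pnn: "\<And>j. 1 \<le> j \<Longrightarrow> j \<le> k \<Longrightarrow> p j \<ge> 0"
    and qnn: "\<And>j. 1 \<le> j \<Longrightarrow> j \<le> k \<Longrightarrow> q j \<ge> 0"
    and sum1: "(\<Sum>j = 1..k. p j + q j) = 1"
    and psum: "(\<Sum>j = 1..k. p j) > 0"
    and qsum: "(\<Sum>j = 1..k. q j) > 0"
begin

abbreviation "P \<equiv> kp k p"
abbreviation "Q \<equiv> kq k q"
abbreviation "c \<equiv> chi_coeff k p q"

lemmas kp_facts = max_positive_index[OF pnn psum, folded kp_def]
lemmas kq_facts = max_positive_index[OF qnn qsum, folded kq_def]

lemma chi_coeff_below: assumes "j < k - Q" shows "c j = 0"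
proof -
  have "(\<Sum>l = k - j..k. q l) = 0"
    using assms kq_facts(4) by (intro sum.neutral) auto
  then show ?thesis unfolding chi_coeff_def using assms by simp
qed

lemma chi_coeff_above: assumes "k + P \<le> j" shows "c j = 0"
proof (cases "j < 2 * k")
  case True
  have "(\<Sum>l = j + 1 - k..k. p l) = 0"
    using assms kp_facts(4) by (intro sum.neutral) auto
  then show ?thesis unfolding chi_coeff_def using assms True by simp
next
  case False then show ?thesis unfolding chi_coeff_def using assms by simp
qed

lemma chi_coeff_low_end: "c (k - Q) = - q Q"
proof -
  have "(\<Sum>l = Q..k. q l) = q Q + (\<Sum>l = Suc Q..k. q l)"
    using kq_facts(2) by (simp add: sum.atLeast_Suc_atMost)
  also have "(\<Sum>l = Suc Q..k. q l) = 0" using kq_facts(4) by (intro sum.neutral) auto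
  finally have s: "(\<Sum>l = Q..k. q l) = q Q" by simp
  have lt: "k - Q < k" using kq_facts(1,2) by simp
  have e: "k - (k - Q) = Q" using kq_facts(2) by simp
  show ?thesis unfolding chi_coeff_def using lt by (simp only: if_True e s)
qed

lemma chi_coeff_high_end: "c (k + P - 1) = p P"
proof -
  have "(\<Sum>l = P..k. p l) = p P + (\<Sum>l = Suc P..k. p l)"
    using kp_facts(2) by (simp add: sum.atLeast_Suc_atMost)
  also have "(\<Sum>l = Suc P..k. p l) = 0" using kp_facts(4) by (intro sum.neutral) auto
  finally have s: "(\<Sum>l = P..k. p l) = p P" by simp
  have e: "k + P - 1 + 1 - k = P" using kp_facts(1) by simp
  have lt: "\<not> k + P - 1 < k" "k + P - 1 < 2 * k" using kp_facts(1,2) by auto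
  show ?thesis unfolding chi_coeff_def using lt by (simp only: if_False if_True e s)
qed

lemma coeff_chi: "coeff (chi k p q) j = complex_of_real (c j)"
proof (cases "j < 2 * k")
  case True
  then show ?thesis unfolding chi_def coeff_Poly_eq by (simp add: nth_default_def)
next
  case False
  then have "c j = 0" unfolding chi_coeff_def by simp
  then show ?thesis using False unfolding chi_def coeff_Poly_eq by (simp add: nth_default_def)
qed

lemma chi_nonzero: "chi k p q \<noteq> 0"
proof
  assume "chi k p q = 0"
  moreover have "coeff (chi k p q) (k+P-1) = complex_of_real (p P)" by (simp only: coeff_chi chi_coeff_high_end)
  ultimately show False using kp_facts(3) by simp
qed

lemma degree_chi: "degree (chi k p q) = k + P - 1"
proof (rule antisym)
  show "degree (chi k p q) \<le> k + P - 1"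
  proof (rule degree_le, intro allI impI)
    fix i assume "k + P - 1 < i"
    then have "k + P \<le> i" using kp_facts(1) by simp
    then show "coeff (chi k p q) i = 0" by (simp add: coeff_chi chi_coeff_above)
  qed
  have h: "coeff (chi k p q) (k+P-1) = complex_of_real (p P)" by (simp only: coeff_chi chi_coeff_high_end)
  show "k + P - 1 \<le> degree (chi k p q)"
    by (rule le_degree) (use h kp_facts(3) in simp)
qed

lemma order_0_chi: "order 0 (chi k p q) = k - Q"
proof (rule antisym)
  have "monom 1 (k - Q) dvd chi k p q"
    unfolding monom_1_dvd_iff' by (simp add: coeff_chi chi_coeff_below)
  then show "k - Q \<le> order 0 (chi k p q)" using monom_1_dvd_iff[OF chi_nonzero] by blast
  show "order 0 (chi k p q) \<le> k - Q"
  proof (rule ccontr)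
    assume "\<not> order 0 (chi k p q) \<le> k - Q"
    then have "monom 1 (Suc (k - Q)) dvd chi k p q" using monom_1_dvd_iff[OF chi_nonzero] by simp
    then have "coeff (chi k p q) (k - Q) = 0" unfolding monom_1_dvd_iff' by simp
    moreover have "coeff (chi k p q) (k - Q) = complex_of_real (- q Q)" by (simp only: coeff_chi chi_coeff_low_end)
    ultimately show False using kq_facts(3) by simp
  qed
qed

lemma sum_order_nonzero_roots_chi:
  "(\<Sum>z\<in>{z. z \<noteq> 0 \<and> poly (chi k p q) z = 0}. order z (chi k p q)) = P + Q - 1"
proof -
  have "k + P - 1 - (k - Q) = P + Q - 1" using kp_facts(1,2) kq_facts(1,2) by simp
  then show ?thesis unfolding sum_order_nonzero_roots[OF chi_nonzero] degree_chi order_0_chi .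
qed

end

text \<open>The difference operator with characteristic polynomial \<open>\<chi>\<close>; the columns of \<open>Z\<close> lie in its kernel.\<close>

definition char_op :: "nat \<Rightarrow> (nat \<Rightarrow> real) \<Rightarrow> (nat \<Rightarrow> real) \<Rightarrow> (int \<Rightarrow> complex) \<Rightarrow> int \<Rightarrow> complex" where
  "char_op k p q Y i = (\<Sum>j<2*k. complex_of_real (chi_coeff k p q j) * Y (i + 1 + int j - int k))"

lemma sum_lessThan_atLeastAtMost_swap:
  fixes f :: "nat \<Rightarrow> nat \<Rightarrow> 'a::comm_monoid_add"
  shows "(\<Sum>m<n. \<Sum>l\<in>{Suc m..n}. f m l) = (\<Sum>l\<in>{1..n}. \<Sum>m<l. f m l)"
proof (induction n)
  case 0 then show ?case by simp
next
  case (Suc n)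
  have "(\<Sum>m<Suc n. \<Sum>l\<in>{Suc m..Suc n}. f m l) = (\<Sum>m<Suc n. (\<Sum>l\<in>{Suc m..n}. f m l) + f m (Suc n))"
    by (intro sum.cong refl) (auto simp: sum.cl_ivl_Suc)
  also have "\<dots> = (\<Sum>m<n. \<Sum>l\<in>{Suc m..n}. f m l) + (\<Sum>m<Suc n. f m (Suc n))"
    by (simp add: sum.distrib)
  also have "\<dots> = (\<Sum>l\<in>{1..Suc n}. \<Sum>m<l. f m l)" using Suc by simp
  finally show ?case .
qed

lemma sum_lessThan_add:
  fixes F :: "nat \<Rightarrow> 'a::comm_monoid_add"
  shows "(\<Sum>j<a+b. F j) = (\<Sum>j<a. F j) + (\<Sum>m<b. F (a+m))"
  by (induction b) (simp_all add: add.assoc)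

lemma char_op_add: "char_op k p q (\<lambda>e. F e + G e) i = char_op k p q F i + char_op k p q G i"
  unfolding char_op_def by (simp add: sum.distrib algebra_simps)

lemma char_op_cmult: "char_op k p q (\<lambda>e. a * F e) i = a * char_op k p q F i"
  unfolding char_op_def by (simp add: sum_distrib_left algebra_simps)

lemma char_op_sum: "char_op k p q (\<lambda>e. \<Sum>x\<in>A. F x e) i = (\<Sum>x\<in>A. char_op k p q (F x) i)"
  unfolding char_op_def by (simp add: sum_distrib_left sum.swap[of _ A])

lemma char_op_diff: "char_op k p q (\<lambda>e. F e - G e) i = char_op k p q F i - char_op k p q G i"
  unfolding char_op_def by (simp add: sum_subtractf algebra_simps)

lemma char_op_upper_half:
  fixes U :: "int \<Rightarrow> complex"
  shows "(\<Sum>m<k. complex_of_real (chi_coeff k p q (k + m)) * (U (i + int (Suc m)) - U (i + int m)))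
       = (\<Sum>l=1..k. complex_of_real (p l) * (U (i + int l) - U i))"
proof -
  have "(\<Sum>m<k. complex_of_real (chi_coeff k p q (k + m)) * (U (i + int (Suc m)) - U (i + int m)))
      = (\<Sum>m<k. \<Sum>l\<in>{Suc m..k}. complex_of_real (p l) * (U (i + int (Suc m)) - U (i + int m)))"
    by (intro sum.cong refl) (auto simp: chi_coeff_def sum_distrib_right)
  also have "\<dots> = (\<Sum>l\<in>{1..k}. \<Sum>m<l. complex_of_real (p l) * (U (i + int (Suc m)) - U (i + int m)))"
    by (rule sum_lessThan_atLeastAtMost_swap)
  also have "\<dots> = (\<Sum>l\<in>{1..k}. complex_of_real (p l) * (U (i + int l) - U i))"
    using sum_lessThan_telescope[of "\<lambda>n. U (i + int n)"]
    by (intro sum.cong refl) (simp add: sum_distrib_left[symmetric])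
  finally show ?thesis .
qed

lemma char_op_lower_half:
  fixes U :: "int \<Rightarrow> complex"
  shows "(\<Sum>j<k. complex_of_real (chi_coeff k p q j) * (U (i + 1 + int j - int k) - U (i + int j - int k)))
       = (\<Sum>l=1..k. complex_of_real (q l) * (U (i - int l) - U i))"
proof -
  let ?F = "\<lambda>j. complex_of_real (chi_coeff k p q j) * (U (i + 1 + int j - int k) - U (i + int j - int k))"
  have "(\<Sum>j<k. ?F j) = (\<Sum>m<k. ?F (k - Suc m))"
    by (rule sum.nat_diff_reindex[symmetric])
  also have "\<dots> = (\<Sum>m<k. \<Sum>l\<in>{Suc m..k}. - complex_of_real (q l) * (U (i - int m) - U (i - int (Suc m))))"
  proof (intro sum.cong refl)
    fix m assume m: "m \<in> {..<k}"
    then have cm: "chi_coeff k p q (k - Suc m) = - (\<Sum>l = Suc m..k. q l)" by (auto simp: chi_coeff_def)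
    have ix: "i + 1 + int (k - Suc m) - int k = i - int m" "i + int (k - Suc m) - int k = i - int (Suc m)"
      using m by auto
    show "?F (k - Suc m) = (\<Sum>l\<in>{Suc m..k}. - complex_of_real (q l) * (U (i - int m) - U (i - int (Suc m))))"
      unfolding cm ix by (simp add: sum_distrib_right sum_negf)
  qed
  also have "\<dots> = (\<Sum>l\<in>{1..k}. \<Sum>m<l. - complex_of_real (q l) * (U (i - int m) - U (i - int (Suc m))))"
    by (rule sum_lessThan_atLeastAtMost_swap)
  also have "\<dots> = (\<Sum>l\<in>{1..k}. complex_of_real (q l) * (U (i - int l) - U i))"
  proof (intro sum.cong refl)
    fix l
    have "(\<Sum>m<l. U (i - int m) - U (i - int (Suc m))) = U (i - int 0) - U (i - int l)"
      by (rule sum_lessThan_telescope'[of "\<lambda>n. U (i - int n)"])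
    then have "(\<Sum>m<l. - complex_of_real (q l) * (U (i - int m) - U (i - int (Suc m))))
           = - complex_of_real (q l) * (U i - U (i - int l))"
      by (subst sum_distrib_left[symmetric]) simp
    then show "(\<Sum>m<l. - complex_of_real (q l) * (U (i - int m) - U (i - int (Suc m)))) = complex_of_real (q l) * (U (i - int l) - U i)"
      by (simp add: algebra_simps)
  qed
  finally show ?thesis .
qed

context random_leap begin

lemma sum_p_q_complex: "(\<Sum>l=1..k. complex_of_real (p l + q l)) = 1"
  using sum1 by (metis of_real_1 of_real_sum)

lemma generator_eq_char_op:
  fixes U :: "int \<Rightarrow> complex"
  shows "(\<Sum>l=1..k. complex_of_real (p l) * U (i + int l) + complex_of_real (q l) * U (i - int l)) - U i
         = char_op k p q (\<lambda>e. U e - U (e - 1)) i"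
proof -
  have "char_op k p q (\<lambda>e. U e - U (e - 1)) i
      = (\<Sum>j<k. complex_of_real (c j) * (U (i + 1 + int j - int k) - U (i + int j - int k)))
      + (\<Sum>m<k. complex_of_real (c (k + m)) * (U (i + int (Suc m)) - U (i + int m)))"
    unfolding char_op_def mult_2 sum_lessThan_add by (simp add: algebra_simps)
  also have "\<dots> = (\<Sum>l=1..k. complex_of_real (q l) * (U (i - int l) - U i))
      + (\<Sum>l=1..k. complex_of_real (p l) * (U (i + int l) - U i))"
    unfolding char_op_upper_half char_op_lower_half ..
  also have "\<dots> = (\<Sum>l=1..k. complex_of_real (p l) * U (i + int l) + complex_of_real (q l) * U (i - int l))
       - (\<Sum>l=1..k. complex_of_real (p l + q l)) * U i"
    by (simp add: sum.distrib sum_subtractf algebra_simps sum_distrib_right sum_distrib_left)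
  finally show ?thesis using sum_p_q_complex by simp
qed

lemma char_op_const: "char_op k p q (\<lambda>e. 1) i = complex_of_real (drift k p q)"
proof -
  have "char_op k p q (\<lambda>e. 1) i = char_op k p q (\<lambda>e. complex_of_int e - complex_of_int (e - 1)) i" by simp
  also have "\<dots> = (\<Sum>l=1..k. complex_of_real (p l) * complex_of_int (i + int l) + complex_of_real (q l) * complex_of_int (i - int l)) - complex_of_int i"
    by (rule generator_eq_char_op[symmetric])
  also have "(\<Sum>l=1..k. complex_of_real (p l) * complex_of_int (i + int l) + complex_of_real (q l) * complex_of_int (i - int l))
      = (\<Sum>l=1..k. complex_of_int i * complex_of_real (p l + q l) + of_nat l * complex_of_real (p l - q l))"
    by (rule sum.cong) (simp_all add: algebra_simps)
  also have "\<dots> = complex_of_int i * (\<Sum>l=1..k. complex_of_real (p l + q l)) + (\<Sum>l=1..k. of_nat l * complex_of_real (p l - q l))"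
    by (simp only: sum.distrib sum_distrib_left)
  also have "(\<Sum>l=1..k. complex_of_real (p l + q l)) = 1"
    by (rule sum_p_q_complex)
  also have "(\<Sum>l=1..k. of_nat l * complex_of_real (p l - q l)) = complex_of_real (drift k p q)"
    unfolding drift_def by simp
  finally show ?thesis by simp
qed

abbreviation "second_moment \<equiv> (\<Sum>j = 1..k. (real j)\<^sup>2 * (p j + q j))"

lemma char_op_linear: "char_op k p q (\<lambda>e. 2 * complex_of_int e - 1) i = 2 * complex_of_int i * complex_of_real (drift k p q) + complex_of_real second_moment"
proof -
  have "char_op k p q (\<lambda>e. 2 * complex_of_int e - 1) i = char_op k p q (\<lambda>e. (complex_of_int e)^2 - (complex_of_int (e - 1))^2) i"
    by (simp add: power2_eq_square algebra_simps)
  also have "\<dots> = (\<Sum>l=1..k. complex_of_real (p l) * (complex_of_int (i + int l))^2 + complex_of_real (q l) * (complex_of_int (i - int l))^2) - (complex_of_int i)^2"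
    by (rule generator_eq_char_op[symmetric])
  also have "(\<Sum>l=1..k. complex_of_real (p l) * (complex_of_int (i + int l))^2 + complex_of_real (q l) * (complex_of_int (i - int l))^2)
     = (\<Sum>l=1..k. (complex_of_int i)^2 * complex_of_real (p l + q l)
      + 2 * complex_of_int i * (of_nat l * complex_of_real (p l - q l))
      + (of_nat l)^2 * complex_of_real (p l + q l))"
    by (rule sum.cong) (simp_all add: algebra_simps power2_eq_square)
  also have "\<dots> = (complex_of_int i)^2 * (\<Sum>l=1..k. complex_of_real (p l + q l))
      + 2 * complex_of_int i * (\<Sum>l=1..k. of_nat l * complex_of_real (p l - q l))
      + (\<Sum>l=1..k. (of_nat l)^2 * complex_of_real (p l + q l))"
    by (simp only: sum.distrib sum_distrib_left)
  also have "(\<Sum>l=1..k. complex_of_real (p l + q l)) = 1"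
    by (rule sum_p_q_complex)
  also have "(\<Sum>l=1..k. of_nat l * complex_of_real (p l - q l)) = complex_of_real (drift k p q)"
    unfolding drift_def by simp
  also have "(\<Sum>l=1..k. (of_nat l)^2 * complex_of_real (p l + q l)) = complex_of_real second_moment"
    by simp
  finally show ?thesis by simp
qed

lemma second_moment_pos: "second_moment > 0"
proof -
  have "(\<Sum>j = 1..k. p j + q j) \<le> second_moment"
  proof (intro sum_mono)
    fix j assume j: "j \<in> {1..k}"
    have "1 \<le> (real j)^2" using j by simp
    moreover have "0 \<le> p j + q j" using pnn qnn j by (simp add: add_nonneg_nonneg)
    ultimately show "p j + q j \<le> (real j)\<^sup>2 * (p j + q j)"
      using mult_right_mono[of 1 "(real j)^2" "p j + q j"] by simp
  qed
  then show ?thesis using sum1 by simp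
qed

lemma char_op_delta: "char_op k p q (\<lambda>e. delta_entry (drift k p q) (variance_xi k p q) e) i = -1"
proof (cases "drift k p q = 0")
  case False
  have "char_op k p q (\<lambda>e. delta_entry (drift k p q) (variance_xi k p q) e) i
      = char_op k p q (\<lambda>e. complex_of_real (- 1 / drift k p q) * 1) i"
    unfolding delta_entry_def using False by simp
  also have "\<dots> = complex_of_real (- 1 / drift k p q) * complex_of_real (drift k p q)"
    by (simp only: char_op_cmult char_op_const)
  finally show ?thesis using False by (simp flip: of_real_mult)
next
  case True
  have v: "variance_xi k p q = second_moment" unfolding variance_xi_def using True by simp
  have "char_op k p q (\<lambda>e. delta_entry (drift k p q) (variance_xi k p q) e) i
      = char_op k p q (\<lambda>e. complex_of_real (- 1 / second_moment) * (2 * complex_of_int e - 1) + complex_of_real (- 1 / second_moment) * 1) i"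
  proof (intro arg_cong[where f="\<lambda>F. char_op k p q F i"] ext)
    fix e
    have "- 2 * real_of_int e / second_moment = 2 * real_of_int e * (- 1 / second_moment)" by simp
    then have "complex_of_real (- 2 * real_of_int e / second_moment) = 2 * complex_of_int e * complex_of_real (- 1 / second_moment)"
      by simp
    moreover have "delta_entry (drift k p q) (variance_xi k p q) e = complex_of_real (- 2 * real_of_int e / second_moment)"
      unfolding delta_entry_def v using True by simp
    moreover have "\<And>a x::complex. 2 * x * a = a * (2 * x - 1) + a * 1" by (simp add: algebra_simps)
    ultimately show "delta_entry (drift k p q) (variance_xi k p q) e = complex_of_real (- 1 / second_moment) * (2 * complex_of_int e - 1) + complex_of_real (- 1 / second_moment) * 1"
      by metis
  qed
  also have "\<dots> = complex_of_real (- 1 / second_moment) * complex_of_real second_moment"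
    by (simp only: char_op_add char_op_cmult char_op_const char_op_linear True) simp
  also have "\<dots> = complex_of_real ((- 1 / second_moment) * second_moment)" by (rule of_real_mult[symmetric])
  also have "(- 1 / second_moment) * second_moment = -1" using second_moment_pos by simp
  finally show ?thesis by simp
qed

definition Z_column :: "complex \<Rightarrow> nat \<Rightarrow> int \<Rightarrow> complex" where
  "Z_column z l e = complex_of_int e ^ (l - 1) * z powi e"

lemma char_op_Z_column:
  assumes z: "z \<noteq> 0" and l: "1 \<le> l" "l \<le> order z (chi k p q)"
  shows "char_op k p q (Z_column z l) i = 0"
proof -
  define s0 where "s0 = i + 1 - int k"
  have deg: "degree (chi k p q) < 2 * k" using degree_chi kp_facts(1,2) by simp
  have "char_op k p q (Z_column z l) i = (\<Sum>j<2*k. z powi s0 * (coeff (chi k p q) j * (of_nat j + of_int s0) ^ (l - 1) * z ^ j))"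
    unfolding char_op_def Z_column_def
  proof (intro sum.cong refl)
    fix j
    have e: "i + 1 + int j - int k = s0 + int j" unfolding s0_def by simp
    have "z powi (s0 + int j) = z powi s0 * z ^ j" using z by (simp add: power_int_add)
    then show "complex_of_real (c j) * (complex_of_int (i + 1 + int j - int k) ^ (l - 1) * z powi (i + 1 + int j - int k)) =
         z powi s0 * (coeff (chi k p q) j * (of_nat j + of_int s0) ^ (l - 1) * z ^ j)"
      unfolding e coeff_chi by (simp add: algebra_simps)
  qed
  also have "\<dots> = z powi s0 * poly_moment (2*k) (chi k p q) z (of_int s0) (l - 1)"
    unfolding poly_moment_def by (simp add: sum_distrib_left)
  also have "poly_moment (2*k) (chi k p q) z (of_int s0) (l - 1) = 0"
proof -
    have "\<forall>a<order z (chi k p q). poly_moment (2*k) (chi k p q) z 0 a = 0"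
      using poly_moment_eq_0_if_less_order[OF chi_nonzero deg] by blast
    then show ?thesis using poly_moment_shift[of "order z (chi k p q)" "2*k" "chi k p q" z 0 "l-1" "of_int s0"] l by simp
  qed
  finally show ?thesis by simp
qed

end

lemma sum_int_symmetric_interval:
  fixes g :: "int \<Rightarrow> 'a::comm_monoid_add"
  shows "(\<Sum>x\<in>{-int n..int n}. g x) = g 0 + (\<Sum>l=1..n. g (int l) + g (- int l))"
proof (induction n)
  case 0 then show ?case by simp
next
  case (Suc n)
  have "{-int (Suc n)..int (Suc n)} = insert (int (Suc n)) (insert (- int (Suc n)) {-int n..int n})"
    by auto
  then have "(\<Sum>x\<in>{-int (Suc n)..int (Suc n)}. g x)
      = g (int (Suc n)) + (g (- int (Suc n)) + (\<Sum>x\<in>{-int n..int n}. g x))"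
    by (simp add: sum.insert)
  then show ?case using Suc by (simp add: algebra_simps)
qed

lemma leap_paths_nonempty: "xs \<in> set_pmf (leap_paths k p q N i n) \<Longrightarrow> xs \<noteq> []"
  by (induction n arbitrary: xs) auto

lemma leap_paths_Suc_first:
  "leap_paths k p q N i (Suc n) =
     bind_pmf (leap_step k p q N i) (\<lambda>j. map_pmf (\<lambda>xs. i # xs) (leap_paths k p q N j n))"
proof (induction n)
  case 0
  show ?case by (simp add: bind_return_pmf map_pmf_def bind_assoc_pmf)
next
  case (Suc n)
  have "leap_paths k p q N i (Suc (Suc n)) = bind_pmf (leap_paths k p q N i (Suc n))
       (\<lambda>xs. map_pmf (\<lambda>j. xs @ [j]) (leap_step k p q N (last xs)))" by simp
  also have "\<dots> = bind_pmf (leap_step k p q N i) (\<lambda>j. bind_pmf (leap_paths k p q N j n)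
       (\<lambda>ys. map_pmf (\<lambda>j'. (i # ys) @ [j']) (leap_step k p q N (last (i # ys)))))"
    unfolding Suc by (simp add: bind_assoc_pmf bind_map_pmf)
  also have "\<dots> = bind_pmf (leap_step k p q N i) (\<lambda>j. bind_pmf (leap_paths k p q N j n)
       (\<lambda>ys. map_pmf (\<lambda>xs. i # xs) (map_pmf (\<lambda>j'. ys @ [j']) (leap_step k p q N (last ys)))))"
    by (intro bind_pmf_cong refl) (auto dest: leap_paths_nonempty simp: map_pmf_comp)
  also have "\<dots> = bind_pmf (leap_step k p q N i) (\<lambda>j. map_pmf (\<lambda>xs. i # xs) (leap_paths k p q N j (Suc n)))"
    by (simp add: map_bind_pmf)
  finally show ?case .
qed

lemma emeasure_leap_paths_Suc:
  "emeasure (measure_pmf (leap_paths k p q N i (Suc n))) A =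
     (\<integral>\<^sup>+j. emeasure (measure_pmf (leap_paths k p q N j n)) ((\<lambda>xs. i # xs) -` A) \<partial>measure_pmf (leap_step k p q N i))"
  unfolding leap_paths_Suc_first by simp

definition avoiding :: "nat \<Rightarrow> nat list set" where
  "avoiding N = {xs. \<forall>x\<in>set xs. x \<noteq> 0 \<and> x \<noteq> N}"

lemma tail_prob_avoiding:
  "tail_prob k p q N i n = measure_pmf.prob (leap_paths k p q N i n) (avoiding N)"
  unfolding tail_prob_def avoiding_def ..

lemma tail_prob_nonneg: "0 \<le> tail_prob k p q N i n"
  by (simp add: tail_prob_def)

lemma tail_prob_le_1: "tail_prob k p q N i n \<le> 1"
  by (simp add: tail_prob_def)

lemma tail_prob_0: "tail_prob k p q N i 0 = (if i \<noteq> 0 \<and> i \<noteq> N then 1 else 0)"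
  unfolding tail_prob_avoiding by (simp add: avoiding_def)

lemma clampN_le: "clampN N x \<le> N"
  unfolding clampN_def by auto

lemma clampN_simps:
  "x \<le> 0 \<Longrightarrow> clampN N x = 0"
  "int N \<le> x \<Longrightarrow> clampN N x = N"
  "0 \<le> x \<Longrightarrow> x \<le> int N \<Longrightarrow> clampN N x = nat x"
  unfolding clampN_def by auto

text \<open>The expectation of \<open>f (X\<^sub>1)\<close> given \<open>X\<^sub>0 = i\<close>, for an interior state \<open>i\<close>.\<close>

definition leap_mean :: "nat \<Rightarrow> (nat \<Rightarrow> real) \<Rightarrow> (nat \<Rightarrow> real) \<Rightarrow> nat \<Rightarrow> (nat \<Rightarrow> 'a::real_algebra_1) \<Rightarrow> nat \<Rightarrow> 'a" where
  "leap_mean k p q N f i =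
     (\<Sum>l=1..k. of_real (p l) * f (clampN N (int i + int l)) + of_real (q l) * f (clampN N (int i - int l)))"

context random_leap begin

definition xi_density :: "int \<Rightarrow> real" where
  "xi_density x = (if 1 \<le> x \<and> x \<le> int k then p (nat x)
           else if - int k \<le> x \<and> x \<le> -1 then q (nat (- x)) else 0)"

lemma xi_density_nonneg: "0 \<le> xi_density x"
  unfolding xi_density_def using pnn qnn by auto

lemma xi_density_eq_0: "x \<notin> {-int k..int k} \<Longrightarrow> xi_density x = 0"
  unfolding xi_density_def by auto

lemma sum_xi_density:
  fixes h :: "int \<Rightarrow> ennreal"
  shows "(\<Sum>x\<in>{-int k..int k}. h x * ennreal (xi_density x))
       = (\<Sum>l=1..k. ennreal (p l) * h (int l) + ennreal (q l) * h (- int l))"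
  by (auto simp: sum_int_symmetric_interval xi_density_def mult.commute intro!: sum.cong)

lemma nn_integral_xi_density: "(\<integral>\<^sup>+x. ennreal (xi_density x) \<partial>count_space UNIV) = 1"
proof -
  have "(\<integral>\<^sup>+x. ennreal (xi_density x) \<partial>count_space UNIV) = (\<Sum>x\<in>{-int k..int k}. 1 * ennreal (xi_density x))"
    by (auto intro: nn_integral_count_space' simp: xi_density_eq_0)
  also have "\<dots> = (\<Sum>l=1..k. ennreal (p l + q l))"
    unfolding sum_xi_density using pnn qnn by (auto intro!: sum.cong simp: ennreal_plus)
  also have "\<dots> = 1" using pnn qnn sum1 by (subst sum_ennreal) auto
  finally show ?thesis .
qed

lemma pmf_xi_pmf: "pmf (xi_pmf k p q) x = xi_density x"
proof -
  have "xi_pmf k p q = embed_pmf xi_density"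
    unfolding xi_pmf_def xi_density_def ..
  then show ?thesis using pmf_embed_pmf[OF xi_density_nonneg nn_integral_xi_density] by simp
qed

lemma nn_integral_xi_pmf:
  fixes h :: "int \<Rightarrow> ennreal"
  shows "(\<integral>\<^sup>+x. h x \<partial>measure_pmf (xi_pmf k p q))
       = (\<Sum>l=1..k. ennreal (p l) * h (int l) + ennreal (q l) * h (- int l))"
proof -
  have "set_pmf (xi_pmf k p q) \<subseteq> {-int k..int k}"
  proof
    fix x assume "x \<in> set_pmf (xi_pmf k p q)"
    then have "xi_density x \<noteq> 0" by (simp add: set_pmf_eq pmf_xi_pmf)
    then show "x \<in> {-int k..int k}" using xi_density_eq_0 by blast
  qed
  then have "(\<integral>\<^sup>+x. h x \<partial>measure_pmf (xi_pmf k p q)) = (\<Sum>x\<in>{-int k..int k}. h x * pmf (xi_pmf k p q) x)"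
    by (intro nn_integral_measure_pmf_support) auto
  then show ?thesis
    by (simp add: pmf_xi_pmf sum_xi_density)
qed

lemma tail_prob_Suc_ennreal:
  assumes "0 < i" "i < N"
  shows "ennreal (tail_prob k p q N i (Suc n)) =
    (\<Sum>l=1..k. ennreal (p l) * ennreal (tail_prob k p q N (clampN N (int i + int l)) n)
        + ennreal (q l) * ennreal (tail_prob k p q N (clampN N (int i - int l)) n))"
proof -
  have "(\<lambda>xs. i # xs) -` avoiding N = avoiding N"
    using assms by (auto simp: avoiding_def)
  then have "emeasure (measure_pmf (leap_paths k p q N i (Suc n))) (avoiding N)
      = (\<integral>\<^sup>+j. ennreal (tail_prob k p q N j n) \<partial>measure_pmf (leap_step k p q N i))"
    unfolding emeasure_leap_paths_Suc by (simp add: tail_prob_avoiding measure_pmf.emeasure_eq_measure)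
  then have "ennreal (tail_prob k p q N i (Suc n))
      = (\<integral>\<^sup>+j. ennreal (tail_prob k p q N j n) \<partial>measure_pmf (leap_step k p q N i))"
    by (simp add: tail_prob_avoiding measure_pmf.emeasure_eq_measure)
  also have "\<dots> = (\<integral>\<^sup>+x. ennreal (tail_prob k p q N (clampN N (int i + x)) n) \<partial>measure_pmf (xi_pmf k p q))"
    using assms by (simp add: leap_step_def)
  finally show ?thesis by (simp add: nn_integral_xi_pmf)
qed

lemma tail_prob_Suc:
  assumes "i \<le> N"
  shows "tail_prob k p q N i (Suc n) =
    (if 0 < i \<and> i < N then leap_mean k p q N (\<lambda>j. tail_prob k p q N j n) i else 0)"
proof (cases "0 < i \<and> i < N")
  case True
  have nn: "0 \<le> p l * tail_prob k p q N (clampN N (int i + int l)) n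
        + q l * tail_prob k p q N (clampN N (int i - int l)) n" if "l \<in> {1..k}" for l
    using that pnn qnn tail_prob_nonneg by (auto intro!: add_nonneg_nonneg mult_nonneg_nonneg)
  have "ennreal (tail_prob k p q N i (Suc n))
      = (\<Sum>l=1..k. ennreal (p l * tail_prob k p q N (clampN N (int i + int l)) n
          + q l * tail_prob k p q N (clampN N (int i - int l)) n))"
    unfolding tail_prob_Suc_ennreal[OF True[THEN conjunct1] True[THEN conjunct2]]
    using pnn qnn tail_prob_nonneg by (intro sum.cong refl) (simp add: ennreal_mult ennreal_plus)
  also have "\<dots> = ennreal (\<Sum>l=1..k. p l * tail_prob k p q N (clampN N (int i + int l)) n
          + q l * tail_prob k p q N (clampN N (int i - int l)) n)"
    using nn by (rule sum_ennreal)
  finally have "tail_prob k p q N i (Suc n) = (\<Sum>l=1..k. p l * tail_prob k p q N (clampN N (int i + int l)) n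
          + q l * tail_prob k p q N (clampN N (int i - int l)) n)"
    using nn by (subst (asm) ennreal_inj) (auto intro: sum_nonneg tail_prob_nonneg)
  then show ?thesis
    using True unfolding leap_mean_def by simp
next
  case False
  then have "i = 0 \<or> i = N" using assms by auto
  moreover have "(\<lambda>xs. i # xs) -` avoiding N = {}" if "i = 0 \<or> i = N"
    using that by (auto simp: avoiding_def)
  ultimately have "emeasure (measure_pmf (leap_paths k p q N i (Suc n))) (avoiding N) = 0"
    unfolding emeasure_leap_paths_Suc by simp
  then show ?thesis
    using False by (auto simp: tail_prob_avoiding measure_pmf.emeasure_eq_measure simp del: leap_paths.simps)
qed

end

context random_leap begin

lemma p_kp_le_1: "p P \<le> 1"
proof -
  have "p P \<le> p P + q P" using qnn kp_facts(1,2) by simp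
  also have "\<dots> \<le> (\<Sum>j=1..k. p j + q j)"
    using kp_facts(1,2) pnn qnn by (intro member_le_sum) (auto intro: add_nonneg_nonneg)
  finally show ?thesis using sum1 by simp
qed

lemma leap_mean_mono:
  fixes f g :: "nat \<Rightarrow> real"
  assumes "\<And>j. j \<le> N \<Longrightarrow> f j \<le> g j"
  shows "leap_mean k p q N f i \<le> leap_mean k p q N g i"
  unfolding leap_mean_def using assms pnn qnn clampN_le
  by (auto intro!: sum_mono add_mono mult_left_mono)

lemma norm_leap_mean_le:
  fixes u :: "nat \<Rightarrow> 'a::real_normed_div_algebra"
  shows "norm (leap_mean k p q N u i) \<le> leap_mean k p q N (\<lambda>j. norm (u j)) i"
  unfolding leap_mean_def
proof (rule order.trans[OF norm_sum sum_mono])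
  fix l assume "l \<in> {1..k}"
  then have "0 \<le> p l" "0 \<le> q l" using pnn qnn by auto
  moreover have "norm (of_real (p l) * u (clampN N (int i + int l)) + of_real (q l) * u (clampN N (int i - int l)))
      \<le> norm (of_real (p l) * u (clampN N (int i + int l))) + norm (of_real (q l) * u (clampN N (int i - int l)))"
    by (rule norm_triangle_ineq)
  ultimately show "norm (of_real (p l) * u (clampN N (int i + int l)) + of_real (q l) * u (clampN N (int i - int l)))
      \<le> of_real (p l) * norm (u (clampN N (int i + int l))) + of_real (q l) * norm (u (clampN N (int i - int l)))"
    by (simp add: norm_mult)
qed

end

locale random_leap_on = random_leap +
  fixes N :: nat
  assumes N_ge: "kp k p + kq k q \<le> N"
begin

abbreviation "t \<equiv> tail_prob k p q N"

lemma N_pos: "0 < N"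
  using N_ge kp_facts(1) by simp

lemma tail_prob_N: "t N n = 0"
  by (cases n) (simp_all add: tail_prob_0 tail_prob_Suc)

text \<open>One step of the chain averages the tail probabilities; the jump by \<open>+P\<close> has weight \<open>p P\<close>.\<close>

lemma tail_prob_Suc_le:
  assumes i: "i \<le> N" and B: "\<forall>j\<le>N. t j n \<le> B"
    and B': "t (clampN N (int i + int P)) n \<le> B'" "0 \<le> B'"
  shows "t i (Suc n) \<le> B - p P * (B - B')"
proof (cases "0 < i \<and> i < N")
  case True
  define g where "g l = (if l = P then B' else B)" for l
  have Bc: "t (clampN N x) n \<le> B" for x using B clampN_le by blast
  have "t i (Suc n) = leap_mean k p q N (\<lambda>j. t j n) i"
    using tail_prob_Suc[OF i] True by simp
  also have "\<dots> \<le> (\<Sum>l=1..k. p l * g l + q l * B)"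
    unfolding leap_mean_def g_def using Bc B' pnn qnn
    by (intro sum_mono add_mono) (auto intro!: mult_left_mono)
  also have "\<dots> = (\<Sum>l=1..k. (p l + q l) * B) - (\<Sum>l=1..k. if l = P then p P * (B - B') else 0)"
    unfolding g_def by (subst sum_subtractf[symmetric]) (auto intro!: sum.cong simp: algebra_simps)
  also have "\<dots> = B - p P * (B - B')"
    using sum1 kp_facts(1,2) by (simp add: sum_distrib_right[symmetric])
  finally show ?thesis .
next
  case False
  have "0 \<le> B" using B tail_prob_nonneg[of k p q N 0 n] by auto
  then have "0 \<le> (1 - p P) * B + p P * B'"
    using p_kp_le_1 kp_facts(3) B' by (intro add_nonneg_nonneg mult_nonneg_nonneg) auto
  moreover have "t i (Suc n) = 0" using False tail_prob_Suc[OF i] by auto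
  ultimately show ?thesis by (simp add: algebra_simps)
qed

lemma tail_prob_le_bound:
  assumes B: "\<forall>j\<le>N. t j n \<le> B"
  shows "i \<le> N \<Longrightarrow> t i (n + m) \<le> B"
proof (induction m arbitrary: i)
  case 0 then show ?case using B by simp
next
  case (Suc m)
  have "0 \<le> B" using B tail_prob_nonneg[of k p q N 0 n] by auto
  moreover have "\<forall>j\<le>N. t j (n + m) \<le> B" using Suc.IH by blast
  ultimately show ?case
    using tail_prob_Suc_le[OF Suc.prems _ Suc.IH[OF clampN_le]] by (metis add_Suc_right cancel_comm_monoid_add_class.diff_cancel diff_zero mult_zero_right)
qed

lemma tail_prob_decay:
  assumes B: "\<forall>j\<le>N. t j n \<le> B"
  shows "i \<le> N \<Longrightarrow> N \<le> i + m * P \<Longrightarrow> t i (n + m) \<le> B * (1 - p P ^ m)"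
proof (induction m arbitrary: i)
  case 0
  then show ?case using tail_prob_N by simp
next
  case (Suc m)
  define j where "j = clampN N (int i + int P)"
  have "N \<le> j + m * P"
    using Suc.prems unfolding j_def clampN_def by (auto simp: algebra_simps)
  then have IH: "t j (n + m) \<le> B * (1 - p P ^ m)"
    using Suc.IH clampN_le unfolding j_def by blast
  have "0 \<le> B" using B tail_prob_nonneg[of k p q N 0 n] by auto
  moreover have "p P ^ m \<le> 1" using p_kp_le_1 kp_facts(3) by (auto intro: power_le_one)
  ultimately have "0 \<le> B * (1 - p P ^ m)" by simp
  then have "t i (Suc (n + m)) \<le> B - p P * (B - B * (1 - p P ^ m))"
    using tail_prob_Suc_le[OF Suc.prems(1) _ IH[unfolded j_def]] tail_prob_le_bound[OF B] by blast
  then show ?case by (simp add: algebra_simps)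
qed

definition "theta = 1 - p P ^ N / 2"

lemma theta_bounds: "0 < theta" "theta < 1"
  unfolding theta_def using kp_facts(3) p_kp_le_1 power_le_one[of "p P" N] by auto

lemma tail_prob_mult_N_le: "\<forall>i\<le>N. t i (r * N) \<le> theta ^ r"
proof (induction r)
  case 0 then show ?case using tail_prob_le_1 by simp
next
  case (Suc r)
  show ?case
  proof (intro allI impI)
    fix i assume i: "i \<le> N"
    have "N \<le> i + N * P" using kp_facts(1) by (metis le_add2 mult.right_neutral mult_le_mono2 order_trans)
    then have "t i (r * N + N) \<le> theta ^ r * (1 - p P ^ N)" by (rule tail_prob_decay[OF Suc.IH i])
    also have "\<dots> \<le> theta ^ r * theta"
      using theta_bounds unfolding theta_def by (intro mult_left_mono) auto
    finally show "t i (Suc r * N) \<le> theta ^ Suc r" by (simp add: algebra_simps)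
  qed
qed

definition "rho = root N theta"

lemma rho_bounds: "0 < rho" "rho < 1" "rho ^ N = theta"
  unfolding rho_def using theta_bounds N_pos by (auto simp: real_root_pow_pos)

lemma tail_prob_le_geometric:
  assumes i: "i \<le> N"
  shows "t i n \<le> rho ^ n / theta"
proof -
  have "t i n = t i (n div N * N + n mod N)" by simp
  also have "\<dots> \<le> theta ^ (n div N)"
    by (rule tail_prob_le_bound[OF tail_prob_mult_N_le i])
  also have "\<dots> \<le> rho ^ n / theta"
proof -
    have "rho ^ n = theta ^ (n div N) * rho ^ (n mod N)"
      by (metis div_mult_mod_eq mult.commute power_add power_mult rho_bounds(3))
    moreover have "rho ^ N \<le> rho ^ (n mod N)"
      using rho_bounds N_pos by (intro power_decreasing) auto
    ultimately have "theta ^ (n div N) * theta \<le> rho ^ n"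
      using rho_bounds theta_bounds by (simp add: mult_left_mono)
    then show ?thesis using theta_bounds by (simp add: field_simps)
  qed
  finally show ?thesis .
qed

lemma summable_tail_prob:
  assumes "i \<le> N"
  shows "summable (t i)"
proof (rule summable_comparison_test'[where N=0])
  show "summable (\<lambda>n. rho ^ n / theta)"
    using rho_bounds by (intro summable_divide summable_geometric) auto
  show "norm (t i n) \<le> rho ^ n / theta" for n
    using tail_prob_le_geometric[OF assms] tail_prob_nonneg by simp
qed

definition mean_time :: "nat \<Rightarrow> real" where
  "mean_time i = (\<Sum>n. t i n)"

lemma expected_absorption_eq_mean_time:
  "i \<le> N \<Longrightarrow> expected_absorption k p q N i = ennreal (mean_time i)"
  unfolding expected_absorption_def mean_time_def
  using tail_prob_nonneg summable_tail_prob by (intro suminf_ennreal2) auto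

lemma mean_time_nonneg: "i \<le> N \<Longrightarrow> 0 \<le> mean_time i"
  unfolding mean_time_def by (intro suminf_nonneg summable_tail_prob) (auto simp: tail_prob_nonneg)

lemma mean_time_boundary: "i = 0 \<or> i = N \<Longrightarrow> mean_time i = 0"
proof -
  assume "i = 0 \<or> i = N"
  then have "t i n = 0" for n by (cases n) (auto simp: tail_prob_0 tail_prob_Suc)
  then have "t i = (\<lambda>n. 0)" by auto
  then show ?thesis unfolding mean_time_def by simp
qed

lemma mean_time_recurrence:
  assumes i: "0 < i" "i < N"
  shows "mean_time i = 1 + leap_mean k p q N mean_time i"
proof -
  have sm: "summable (t j)" if "j \<le> N" for j using summable_tail_prob that .
  have "mean_time i = t i 0 + (\<Sum>n. t i (Suc n))"
    unfolding mean_time_def using suminf_split_head[OF sm] i by simp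
  also have "(\<Sum>n. t i (Suc n)) = (\<Sum>n. \<Sum>l=1..k. p l * t (clampN N (int i + int l)) n + q l * t (clampN N (int i - int l)) n)"
    using tail_prob_Suc i by (simp add: leap_mean_def)
  also have "\<dots> = (\<Sum>l=1..k. \<Sum>n. p l * t (clampN N (int i + int l)) n + q l * t (clampN N (int i - int l)) n)"
    by (rule suminf_sum) (intro summable_add summable_mult sm clampN_le)
  also have "\<dots> = leap_mean k p q N mean_time i"
    unfolding leap_mean_def mean_time_def
    by (auto intro!: sum.cong simp: suminf_add[symmetric] suminf_mult summable_mult sm clampN_le)
  finally show ?thesis using i by (simp add: tail_prob_0)
qed

end

lemma leap_mean_cmult:
  fixes f :: "nat \<Rightarrow> real"
  shows "leap_mean k p q N (\<lambda>j. C * f j) i = C * leap_mean k p q N f i"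
  unfolding leap_mean_def by (simp add: sum_distrib_left algebra_simps)

context random_leap_on begin

lemma harmonic_norm_le_tail_prob:
  fixes u :: "nat \<Rightarrow> 'a::real_normed_div_algebra"
  assumes u0: "u 0 = 0" and uN: "u N = 0"
    and harm: "\<And>i. 0 < i \<Longrightarrow> i < N \<Longrightarrow> u i = leap_mean k p q N u i"
    and C: "\<And>j. j \<le> N \<Longrightarrow> norm (u j) \<le> C"
  shows "i \<le> N \<Longrightarrow> norm (u i) \<le> C * t i n"
proof (induction n arbitrary: i)
  case 0
  have "0 \<le> C" using C[of 0] norm_ge_zero[of "u 0"] by linarith
  then show ?case using 0 C u0 uN tail_prob_nonneg by (cases "i = 0 \<or> i = N") (auto simp: tail_prob_0)
next
  case (Suc n)
  have "0 \<le> C" using C[of 0] norm_ge_zero[of "u 0"] by linarith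
  show ?case
  proof (cases "0 < i \<and> i < N")
    case True
    have "norm (u i) \<le> leap_mean k p q N (\<lambda>j. norm (u j)) i"
      using harm True norm_leap_mean_le by metis
    also have "\<dots> \<le> leap_mean k p q N (\<lambda>j. C * t j n) i"
      by (rule leap_mean_mono) (rule Suc.IH)
    also have "\<dots> = C * t i (Suc n)"
      using tail_prob_Suc[OF Suc.prems] True by (simp add: leap_mean_cmult)
    finally show ?thesis .
  next
    case False
    then show ?thesis using Suc.prems u0 uN \<open>0 \<le> C\<close> tail_prob_nonneg
      by (cases "i = 0") (auto intro: mult_nonneg_nonneg)
  qed
qed

text \<open>A harmonic function vanishing at both ends is dominated by \<open>C P(T > n) \<rightarrow> 0\<close>.\<close>

lemma harmonic_eq_0:
  fixes u :: "nat \<Rightarrow> 'a::real_normed_div_algebra"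
  assumes u0: "u 0 = 0" and uN: "u N = 0"
    and harm: "\<And>i. 0 < i \<Longrightarrow> i < N \<Longrightarrow> u i = leap_mean k p q N u i"
    and i: "i \<le> N"
  shows "u i = 0"
proof -
  define C where "C = (\<Sum>j\<le>N. norm (u j))"
  have "norm (u j) \<le> C" if "j \<le> N" for j
    unfolding C_def using that by (intro member_le_sum) auto
  then have bound: "norm (u i) \<le> C * t i n" for n
    using harmonic_norm_le_tail_prob[OF u0 uN harm] i by blast
  have "(\<lambda>n. C * t i n) \<longlonglongrightarrow> C * 0"
    by (intro tendsto_mult tendsto_const summable_LIMSEQ_zero summable_tail_prob i)
  then have "norm (u i) \<le> C * 0"
    by (rule LIMSEQ_le_const) (use bound in auto)
  then show ?thesis by simp
qed

end

context random_leap_on begin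

abbreviation "R \<equiv> P + Q - 1"
abbreviation "M \<equiv> N + P + Q - 2"

lemma window_size: "N + R - 1 = M" "R \<le> M" "Q - 1 + N \<le> M"
  using kp_facts(1) kq_facts(1) N_pos by auto

text \<open>Row \<open>x\<close> of the matrices \<open>Z\<close> and \<open>Z\<^sup>\<star>\<close> belongs to the index \<open>e = x + 2 - Q\<close> of the paper, and the
  window is the index range \<open>2 - Q \<le> e \<le> N + P - 1\<close> of these rows.\<close>

definition in_window :: "int \<Rightarrow> bool" where
  "in_window e \<longleftrightarrow> 2 - int Q \<le> e \<and> e \<le> int N + int P - 1"

definition window_vec :: "(int \<Rightarrow> complex) \<Rightarrow> complex vec" where
  "window_vec F = vec M (\<lambda>x. F (int x + 2 - int Q))"

definition window_fun :: "complex vec \<Rightarrow> int \<Rightarrow> complex" where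
  "window_fun y e = (if in_window e then y $ nat (e + int Q - 2) else 0)"

lemma window_vec_carrier [simp]: "window_vec F \<in> carrier_vec M"
  unfolding window_vec_def by simp

lemma window_fun_window_vec: "in_window e \<Longrightarrow> window_fun (window_vec F) e = F e"
  unfolding window_fun_def window_vec_def in_window_def using kp_facts(1) kq_facts(1) by auto

lemma window_vec_window_fun: "y \<in> carrier_vec M \<Longrightarrow> window_vec (window_fun y) = y"
  unfolding window_vec_def window_fun_def in_window_def using kp_facts(1) kq_facts(1)
  by (intro eq_vecI) auto

lemma window_vec_diff: "window_vec (\<lambda>e. F e - G e) = window_vec F - window_vec G"
  unfolding window_vec_def by (intro eq_vecI) auto

lemma char_op_window_cong:
  assumes i: "0 < i" "i < int N" and FG: "\<And>e. in_window e \<Longrightarrow> F e = G e"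
  shows "char_op k p q F i = char_op k p q G i"
  unfolding char_op_def
proof (intro sum.cong refl)
  fix j assume "j \<in> {..<2*k}"
  show "complex_of_real (c j) * F (i + 1 + int j - int k) = complex_of_real (c j) * G (i + 1 + int j - int k)"
  proof (cases "c j = 0")
    case False
    then have "k - Q \<le> j" "j < k + P" using chi_coeff_below chi_coeff_above not_le by blast+
    then have "in_window (i + 1 + int j - int k)" unfolding in_window_def using i kq_facts(2) by auto
    then show ?thesis using FG by simp
  qed simp
qed

abbreviation "Acc i \<equiv> accordion N P Q i"

lemma accordion_carrier: "Acc i \<in> carrier_mat R M"
  unfolding accordion_def by simp

lemma accordion_dims [simp]: "dim_row (Acc i) = R" "dim_col (Acc i) = M"
  using accordion_carrier[of i] by auto

lemma accordion_mult_window_vec: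
  assumes i: "i \<le> N" and a: "a < R"
  shows "(Acc i *\<^sub>v window_vec F) $ a = (if a < Q - 1 then F (int a + 2 - int Q)
     else if a = Q - 1 then (\<Sum>s<i. F (int s + 1)) else F (int N + 1 + int a - int Q))"
proof -
  define col where "col x = (if a < Q - 1 then x = a else if a = Q - 1 then Q - 1 \<le> x \<and> x < Q - 1 + i
      else x = Q - 1 + N + (a - Q))" for x
  have "(Acc i *\<^sub>v window_vec F) $ a = (\<Sum>x\<in>{0..<M}. if col x then F (int x + 2 - int Q) else 0)"
    using a unfolding window_vec_def accordion_def col_def by (auto simp: scalar_prod_def intro!: sum.cong)
  also have "\<dots> = (\<Sum>x\<in>{0..<M} \<inter> Collect col. F (int x + 2 - int Q))"
    by (simp add: sum.inter_restrict)
  also have "\<dots> = (if a < Q - 1 then F (int a + 2 - int Q)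
     else if a = Q - 1 then (\<Sum>s<i. F (int s + 1)) else F (int N + 1 + int a - int Q))"
proof -
    consider "a < Q - 1" | "a = Q - 1" | "Q - 1 < a" by linarith
    then show ?thesis
    proof cases
      case 1
      then have "{0..<M} \<inter> Collect col = {a}" using window_size a unfolding col_def by auto
      then show ?thesis using 1 by simp
    next
      case 2
      then have "{0..<M} \<inter> Collect col = {Q - 1..<Q - 1 + i}" using window_size i unfolding col_def by auto
      moreover have "(\<Sum>x\<in>{Q - 1..<Q - 1 + i}. F (int x + 2 - int Q)) = (\<Sum>s<i. F (int (Q - 1 + s) + 2 - int Q))"
        by (subst sum.atLeastLessThan_shift_0) (simp add: atLeast0LessThan)
      also have "\<dots> = (\<Sum>s<i. F (int s + 1))"
        using kq_facts(1) by (intro sum.cong refl) (simp add: of_nat_diff add.commute)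
      ultimately show ?thesis using 2 by simp
    next
      case 3
      moreover have "Q - 1 + N + (a - Q) < M" using 3 a kq_facts(1) by arith
      ultimately have "{0..<M} \<inter> Collect col = {Q - 1 + N + (a - Q)}"
        unfolding col_def by auto
      moreover have "int (Q - 1 + N + (a - Q)) + 2 - int Q = int N + 1 + int a - int Q"
        using 3 kq_facts(1) by auto
      ultimately show ?thesis using 3 by (simp add: algebra_simps)
    qed
  qed
  finally show ?thesis .
qed

lemma window_fun_eq_0_outside:
  assumes Ay: "Acc N *\<^sub>v window_vec Y = 0\<^sub>v R" and e: "e \<le> 0 \<or> int N + 1 \<le> e"
    and Y: "\<And>e. \<not> in_window e \<Longrightarrow> Y e = 0"
  shows "Y e = 0"
proof (cases "in_window e")
  case True
  have A0: "(Acc N *\<^sub>v window_vec Y) $ a = 0" if "a < R" for a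
    using Ay that by simp
  show ?thesis
  proof (cases "e \<le> 0")
    case True2: True
    define a where "a = nat (e + int Q - 2)"
    have "a < Q - 1" "a < R" "int a + 2 - int Q = e"
      using True True2 kp_facts(1) kq_facts(1) unfolding a_def in_window_def by auto
    then show ?thesis using A0[of a] accordion_mult_window_vec[of N a Y] by simp
  next
    case False
    define a where "a = nat (e - int N - 1 + int Q)"
    have "\<not> a < Q - 1" "a \<noteq> Q - 1" "a < R" "int N + 1 + int a - int Q = e"
      using True False e kp_facts(1) kq_facts(1) unfolding a_def in_window_def by auto
    then show ?thesis using A0[of a] accordion_mult_window_vec[of N a Y] by simp
  qed
qed (use Y in simp)

text \<open>The partial sums of \<open>Y\<close> form a harmonic function vanishing at both ends.\<close>

lemma increments_eq_0:
  assumes Yz: "\<And>e. e \<le> 0 \<or> int N + 1 \<le> e \<Longrightarrow> Y e = 0"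
    and Ysum: "(\<Sum>s<N. Y (int s + 1)) = 0"
    and L: "\<And>i. 0 < i \<Longrightarrow> i < int N \<Longrightarrow> char_op k p q Y i = 0"
  shows "Y e = 0"
proof -
  define u where "u j = (\<Sum>s<j. Y (int s + 1))" for j
  define U where "U x = u (clampN N x)" for x
  have dU: "U e - U (e - 1) = Y e" for e
proof -
    consider "e \<le> 0" | "1 \<le> e \<and> e \<le> int N" | "int N + 1 \<le> e" by linarith
    then show ?thesis
    proof cases
      case 2
      define m where "m = nat e - 1"
      have m: "e = int (Suc m)" "Suc m \<le> N" using 2 unfolding m_def by auto
      have "U e = u (Suc m)" unfolding U_def m using m by (simp add: clampN_simps del: of_nat_Suc)
      moreover have "U (e - 1) = u m" unfolding U_def m using m by (simp add: clampN_simps)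
      ultimately show ?thesis unfolding u_def m by (simp add: add.commute)
    qed (auto simp: U_def u_def clampN_simps Yz Ysum)
  qed
  have harm: "u i = leap_mean k p q N u i" if i: "0 < i" "i < N" for i
proof -
    have "leap_mean k p q N u i - u i
        = (\<Sum>l=1..k. complex_of_real (p l) * U (int i + int l) + complex_of_real (q l) * U (int i - int l)) - U (int i)"
      unfolding leap_mean_def U_def using i by (simp add: clampN_simps)
    also have "\<dots> = char_op k p q Y (int i)"
      unfolding generator_eq_char_op dU ..
    also have "\<dots> = 0" using L i by simp
    finally show ?thesis by simp
  qed
  have "u 0 = 0" "u N = 0" using Ysum by (simp_all add: u_def)
  then have "U x = 0" for x
    unfolding U_def using harmonic_eq_0[of u, OF _ _ harm] clampN_le by blast
  then show ?thesis using dU[of e] by simp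
qed

lemma window_vec_eq_0:
  assumes y: "y \<in> carrier_vec M" and Ay: "Acc N *\<^sub>v y = 0\<^sub>v R"
    and L: "\<And>i. 0 < i \<Longrightarrow> i < int N \<Longrightarrow> char_op k p q (window_fun y) i = 0"
  shows "y = 0\<^sub>v M"
proof -
  define Y where "Y = window_fun y"
  have yY: "window_vec Y = y" unfolding Y_def using window_vec_window_fun[OF y] .
  have Yz: "Y e = 0" if "e \<le> 0 \<or> int N + 1 \<le> e" for e
    using window_fun_eq_0_outside[of Y e] Ay that unfolding yY by (auto simp: Y_def window_fun_def)
  have "(Acc N *\<^sub>v window_vec Y) $ (Q - 1) = 0"
    using Ay kp_facts(1) kq_facts(1) unfolding yY by simp
  then have Ysum: "(\<Sum>s<N. Y (int s + 1)) = 0"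
    using accordion_mult_window_vec[of N "Q - 1" Y] kp_facts(1) kq_facts(1) by simp
  have "char_op k p q Y i = 0" if "0 < i" "i < int N" for i
    using L that unfolding Y_def .
  then have "Y e = 0" for e
    using increments_eq_0[OF Yz Ysum] by blast
  then show ?thesis unfolding yY[symmetric] window_vec_def by (auto intro: eq_vecI)
qed

end

locale random_leap_roots = random_leap_on +
  fixes zs :: "complex list"
  assumes zs_distinct: "distinct zs"
    and zs_set: "set zs = {z. z \<noteq> 0 \<and> poly (chi k p q) z = 0}"
begin

abbreviation "ZC \<equiv> Z_cols (chi k p q) zs"
abbreviation "Zm \<equiv> Zmat N R Q (chi k p q) zs"

lemma length_Z_cols: "length ZC = R"
proof -
  have "length ZC = sum_list (map (\<lambda>z. order z (chi k p q)) zs)"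
    unfolding Z_cols_def length_concat map_map comp_def length_map length_upt by simp
  also have "\<dots> = (\<Sum>z\<in>set zs. order z (chi k p q))"
    by (rule sum_list_distinct_conv_sum_set[OF zs_distinct])
  also have "\<dots> = R" unfolding zs_set by (rule sum_order_nonzero_roots_chi)
  finally show ?thesis .
qed

lemma Z_cols_nth:
  assumes "b < R" "ZC ! b = (z, l)"
  shows "z \<in> set zs" "1 \<le> l" "l \<le> order z (chi k p q)"
proof -
  have "(z, l) \<in> set ZC" using assms length_Z_cols by (metis nth_mem)
  then show "z \<in> set zs" "1 \<le> l" "l \<le> order z (chi k p q)" unfolding Z_cols_def by auto
qed

lemma Z_cols_index:
  assumes "z \<in> set zs" "1 \<le> l" "l \<le> order z (chi k p q)"
  obtains b where "b < R" "ZC ! b = (z, l)"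
proof -
  have "(z, l) \<in> set (map (\<lambda>l. (z, l)) [1..<order z (chi k p q) + 1])" using assms by auto
  then have "(z, l) \<in> set ZC" unfolding Z_cols_def using assms(1) by auto
  then show ?thesis using that length_Z_cols by (metis in_set_conv_nth)
qed

definition Zcol :: "nat \<Rightarrow> int \<Rightarrow> complex" where
  "Zcol b = Z_column (fst (ZC ! b)) (snd (ZC ! b))"

lemma Zmat_carrier: "Zm \<in> carrier_mat M R"
  unfolding Zmat_def using length_Z_cols window_size by simp

lemma Zmat_index: "x < M \<Longrightarrow> b < R \<Longrightarrow> Zm $$ (x, b) = Zcol b (int x + 2 - int Q)"
  unfolding Zmat_def Zcol_def Z_column_def using length_Z_cols window_size
  by (simp add: split_beta Let_def)

lemmas Zmat_index_simplified = Zmat_index[simplified]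

lemma Zmat_mult_vec:
  "v \<in> carrier_vec R \<Longrightarrow> Zm *\<^sub>v v = window_vec (\<lambda>e. \<Sum>b<R. v $ b * Zcol b e)"
  unfolding window_vec_def
  using Zmat_carrier
  by (intro eq_vecI) (auto simp: scalar_prod_def Zmat_index_simplified mult.commute lessThan_atLeast0)

lemma char_op_Zcol: "b < R \<Longrightarrow> char_op k p q (Zcol b) i = 0"
proof -
  assume b: "b < R"
  obtain z l where zl: "ZC ! b = (z, l)" by (cases "ZC ! b")
  have "z \<noteq> 0" using Z_cols_nth(1)[OF b zl] zs_set by auto
  then show ?thesis unfolding Zcol_def zl using char_op_Z_column Z_cols_nth[OF b zl] by simp
qed

lemma char_op_Zcol_comb: "char_op k p q (\<lambda>e. \<Sum>b<R. v $ b * Zcol b e) i = 0"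
  by (simp add: char_op_sum char_op_cmult char_op_Zcol)

lemma sum_Zcol_eq:
  assumes b: "ZC ! b = (z, Suc a)" and z: "z \<noteq> 0"
  shows "(\<Sum>x<R. d x * Zcol b (int x + 2 - int Q))
       = z powi (2 - int Q) * (\<Sum>x<R. d x * (of_nat x + of_int (2 - int Q)) ^ a * z ^ x)"
proof -
  have pw: "d x * Zcol b (int x + 2 - int Q) =
      z powi (2 - int Q) * (d x * (of_nat x + of_int (2 - int Q)) ^ a * z ^ x)" for x
proof -
    have e: "int x + 2 - int Q = int x + (2 - int Q)" by simp
    have "z powi (int x + (2 - int Q)) = z ^ x * z powi (2 - int Q)"
      using z by (simp add: power_int_add)
    then show ?thesis unfolding Zcol_def b Z_column_def e by simp
  qed
  have "(\<Sum>x<R. d x * Zcol b (int x + 2 - int Q))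
      = (\<Sum>x<R. z powi (2 - int Q) * (d x * (of_nat x + of_int (2 - int Q)) ^ a * z ^ x))"
    by (intro sum.cong refl pw)
  then show ?thesis by (simp add: sum_distrib_left)
qed

text \<open>The rows \<open>0, \<dots>, R - 1\<close> of \<open>Z\<close> form a confluent Vandermonde matrix.\<close>

lemma Zmat_top_rows_independent:
  assumes d: "\<And>b. b < R \<Longrightarrow> (\<Sum>x<R. d x * Zcol b (int x + 2 - int Q)) = 0"
  shows "\<forall>x<R. d x = 0"
proof (rule confluent_vandermonde_kernel[of "set zs" "\<lambda>z. order z (chi k p q)" R d "of_int (2 - int Q)"])
  show "finite (set zs)" by simp
  show "0 \<notin> set zs" using zs_set by auto
  show "(\<Sum>z\<in>set zs. order z (chi k p q)) = R"
    unfolding zs_set by (rule sum_order_nonzero_roots_chi)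
  show "\<forall>z\<in>set zs. \<forall>a<order z (chi k p q). (\<Sum>x<R. d x * (of_nat x + of_int (2 - int Q)) ^ a * z ^ x) = 0"
  proof (intro ballI allI impI)
    fix z a assume z: "z \<in> set zs" and a: "a < order z (chi k p q)"
    have z0: "z \<noteq> 0" using z zs_set by auto
    obtain b where b: "b < R" "ZC ! b = (z, Suc a)" using Z_cols_index[OF z, of "Suc a"] a by auto
    have "z powi (2 - int Q) * (\<Sum>x<R. d x * (of_nat x + of_int (2 - int Q)) ^ a * z ^ x) = 0"
      using d[OF b(1)] sum_Zcol_eq[OF b(2) z0] by simp
    then show "(\<Sum>x<R. d x * (of_nat x + of_int (2 - int Q)) ^ a * z ^ x) = 0"
      using z0 by simp
  qed
qed

lemma det_Zmat_top_nonzero: "det (mat R R (\<lambda>(x, b). Zm $$ (x, b))) \<noteq> 0"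
proof -
  define Z' where "Z' = mat R R (\<lambda>(x, b). Zm $$ (x, b))"
  have Z'c: "Z' \<in> carrier_mat R R" unfolding Z'_def by simp
  have Z'i: "x < R \<Longrightarrow> b < R \<Longrightarrow> Z' $$ (x, b) = Zcol b (int x + 2 - int Q)" for x b
    unfolding Z'_def using window_size(2) by (simp add: Zmat_index_simplified)
  have "det Z' \<noteq> 0"
  proof
    assume "det Z' = 0"
    then have "det (transpose_mat Z') = 0" using det_transpose[OF Z'c] by simp
    then obtain d where d: "d \<in> carrier_vec R" "d \<noteq> 0\<^sub>v R" "transpose_mat Z' *\<^sub>v d = 0\<^sub>v R"
      using det_0_iff_vec_prod_zero[of "transpose_mat Z'" R] Z'c by auto
    have "(\<Sum>x<R. d $ x * Zcol b (int x + 2 - int Q)) = 0" if b: "b < R" for b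
    proof -
      have "(transpose_mat Z' *\<^sub>v d) $ b = (\<Sum>x\<in>{0..<R}. Z' $$ (x, b) * d $ x)"
        using b Z'c d(1) by (simp add: scalar_prod_def)
      also have "\<dots> = (\<Sum>x<R. d $ x * Zcol b (int x + 2 - int Q))"
        using b by (auto simp: Z'i lessThan_atLeast0 mult.commute intro!: sum.cong)
      finally show ?thesis using d(3) b by simp
    qed
    then have "\<forall>x<R. d $ x = 0" by (rule Zmat_top_rows_independent)
    then have "d = 0\<^sub>v R" using d(1) by (intro eq_vecI) auto
    with d(2) show False by simp
  qed
  then show ?thesis unfolding Z'_def .
qed

lemma Zmat_injective:
  assumes v: "v \<in> carrier_vec R" and Zv: "Zm *\<^sub>v v = 0\<^sub>v M"
  shows "v = 0\<^sub>v R"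
proof -
  define Z' where "Z' = mat R R (\<lambda>(x, b). Zm $$ (x, b))"
  have Z'c: "Z' \<in> carrier_mat R R" unfolding Z'_def by simp
  have "Z' *\<^sub>v v = 0\<^sub>v R"
  proof (intro eq_vecI)
    fix x assume "x < dim_vec (0\<^sub>v R :: complex vec)"
    then have x: "x < R" by simp
    have "(Z' *\<^sub>v v) $ x = (\<Sum>b\<in>{0..<R}. Z' $$ (x, b) * v $ b)"
      using x Z'c v by (simp add: scalar_prod_def)
    also have "\<dots> = (\<Sum>b\<in>{0..<R}. Zm $$ (x, b) * v $ b)"
      unfolding Z'_def using x by (intro sum.cong refl) simp
    also have "\<dots> = (Zm *\<^sub>v v) $ x"
      using x Zmat_carrier v window_size by (simp add: scalar_prod_def)
    also have "\<dots> = 0" using Zv x window_size by simp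
    finally show "(Z' *\<^sub>v v) $ x = (0\<^sub>v R) $ x" using x by simp
  qed (use Z'c in simp)
  moreover have "det Z' \<noteq> 0" unfolding Z'_def by (rule det_Zmat_top_nonzero)
  ultimately show ?thesis
    using det_0_iff_vec_prod_zero[OF Z'c] v by auto
qed

abbreviation "B \<equiv> Acc N * Zm"

lemma B_carrier: "B \<in> carrier_mat R R"
  by (rule mult_carrier_mat[OF accordion_carrier Zmat_carrier])

lemma det_accordion_Zmat_nonzero: "det B \<noteq> 0"
proof
  assume "det B = 0"
  then obtain v where v: "v \<in> carrier_vec R" "v \<noteq> 0\<^sub>v R" "B *\<^sub>v v = 0\<^sub>v R"
    using det_0_iff_vec_prod_zero[OF B_carrier] by auto
  define y where "y = Zm *\<^sub>v v"
  have "y \<in> carrier_vec M" unfolding y_def using Zmat_carrier v by simp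
  moreover have "Acc N *\<^sub>v y = 0\<^sub>v R"
    unfolding y_def using assoc_mult_mat_vec[OF accordion_carrier Zmat_carrier v(1)] v(3) by simp
  moreover have "char_op k p q (window_fun y) i = 0" if "0 < i" "i < int N" for i
proof -
    have "char_op k p q (window_fun y) i = char_op k p q (\<lambda>e. \<Sum>b<R. v $ b * Zcol b e) i"
      unfolding y_def Zmat_mult_vec[OF v(1)]
      by (rule char_op_window_cong[OF that]) (simp add: window_fun_window_vec)
    then show ?thesis using char_op_Zcol_comb[simplified] by simp
  qed
  ultimately have "y = 0\<^sub>v M" by (rule window_vec_eq_0)
  then have "v = 0\<^sub>v R" using Zmat_injective[OF v(1)] unfolding y_def by simp
  with v(2) show False by simp
qed

lemma accordion_Zmat_solvable:
  assumes "w \<in> carrier_vec R"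
  obtains c where "c \<in> carrier_vec R" "B *\<^sub>v c = w"
proof -
  have "B \<in> Units (ring_mat TYPE(complex) R ())"
    by (rule det_non_zero_imp_unit[OF B_carrier det_accordion_Zmat_nonzero])
  then obtain Bi where Bi: "Bi \<in> carrier_mat R R" "B * Bi = 1\<^sub>m R"
  proof (cases "mat_inverse B")
    case None
    then show ?thesis using mat_inverse(1)[OF B_carrier None, of "()"] \<open>B \<in> Units _\<close> by simp
  next
    case (Some Bi)
    then show ?thesis using mat_inverse(2)[OF B_carrier Some] that by auto
  qed
  show ?thesis
  proof
    show "Bi *\<^sub>v w \<in> carrier_vec R" using Bi assms by simp
    show "B *\<^sub>v (Bi *\<^sub>v w) = w"
      using assoc_mult_mat_vec[OF B_carrier Bi(1) assms] Bi(2) assms by simp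
  qed
qed

end

context random_leap_roots begin

abbreviation "delta \<equiv> delta_entry (drift k p q) (variance_xi k p q)"

definition Z_solution :: "complex vec \<Rightarrow> int \<Rightarrow> complex" where
  "Z_solution v e = (\<Sum>b<R. v $ b * Zcol b e) + delta e"

lemma window_vec_Z_solution:
  "v \<in> carrier_vec R \<Longrightarrow> window_vec (Z_solution v) = Zm *\<^sub>v v + window_vec delta"
  using Zmat_mult_vec[of v] unfolding Z_solution_def window_vec_def by (intro eq_vecI) auto

lemma char_op_Z_solution: "char_op k p q (Z_solution v) i = -1"
  unfolding Z_solution_def char_op_add using char_op_Zcol_comb[simplified] by (simp add: char_op_delta)

lemma accordion_Z_solution:
  assumes v: "v \<in> carrier_vec R" "B *\<^sub>v v = - (Acc N *\<^sub>v window_vec delta)"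
  shows "Acc N *\<^sub>v window_vec (Z_solution v) = 0\<^sub>v R"
proof -
  have "Acc N *\<^sub>v window_vec (Z_solution v) = Acc N *\<^sub>v (Zm *\<^sub>v v) + Acc N *\<^sub>v window_vec delta"
    unfolding window_vec_Z_solution[OF v(1)] using v(1) Zmat_carrier
    by (intro mult_add_distrib_mat_vec[OF accordion_carrier]) auto
  also have "Acc N *\<^sub>v (Zm *\<^sub>v v) = B *\<^sub>v v"
    using assoc_mult_mat_vec[OF accordion_carrier Zmat_carrier v(1)] by simp
  moreover have "Acc N *\<^sub>v window_vec delta \<in> carrier_vec R"
    by (rule mult_mat_vec_carrier[OF accordion_carrier window_vec_carrier])
  ultimately show ?thesis using v(2) by simp
qed

definition mean_increment :: "int \<Rightarrow> complex" where
  "mean_increment e = complex_of_real (mean_time (clampN N e)) - complex_of_real (mean_time (clampN N (e - 1)))"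

lemma accordion_mean_increment: "Acc N *\<^sub>v window_vec mean_increment = 0\<^sub>v R"
proof (intro eq_vecI)
  fix a assume "a < dim_vec (0\<^sub>v R :: complex vec)"
  then have a: "a < R" by simp
  have "(\<Sum>s<N. mean_increment (int s + 1)) = 0"
proof -
    have "(\<Sum>s<N. mean_increment (int s + 1))
        = (\<Sum>s<N. complex_of_real (mean_time (clampN N (int (Suc s)))) - complex_of_real (mean_time (clampN N (int s))))"
      unfolding mean_increment_def by (intro sum.cong refl) (simp add: add.commute)
    also have "\<dots> = 0"
      by (subst sum_lessThan_telescope) (simp add: clampN_simps mean_time_boundary)
    finally show ?thesis .
  qed
  moreover have outside: "mean_increment e = 0" if "e \<le> 0 \<or> int N + 1 \<le> e" for e
    using that unfolding mean_increment_def by (auto simp: clampN_simps)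
  moreover have "int a + 2 - int Q \<le> 0" if "a < Q - 1" using that by simp
  moreover have "int N + 1 \<le> int N + 1 + int a - int Q" if "\<not> a < Q - 1" "a \<noteq> Q - 1"
    using that by simp
  ultimately have "(Acc N *\<^sub>v window_vec mean_increment) $ a = 0"
    using accordion_mult_window_vec[OF le_refl a] by auto
  then show "(Acc N *\<^sub>v window_vec mean_increment) $ a = (0\<^sub>v R) $ a" using a by simp
qed simp

lemma char_op_mean_increment:
  assumes i: "0 < i" "i < int N"
  shows "char_op k p q mean_increment i = -1"
proof -
  let ?V = "\<lambda>x. complex_of_real (mean_time (clampN N x))"
  have "char_op k p q mean_increment i
      = (\<Sum>l=1..k. complex_of_real (p l) * ?V (i + int l) + complex_of_real (q l) * ?V (i - int l)) - ?V i"
    unfolding mean_increment_def by (rule generator_eq_char_op[symmetric])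
  also have "\<dots> = complex_of_real (leap_mean k p q N mean_time (nat i) - mean_time (nat i))"
    using i by (simp add: leap_mean_def clampN_simps)
  also have "\<dots> = -1" using mean_time_recurrence[of "nat i"] i by simp
  finally show ?thesis .
qed

lemma Z_solution_eq_mean_increment:
  assumes v: "v \<in> carrier_vec R" "B *\<^sub>v v = - (Acc N *\<^sub>v window_vec delta)" and e: "in_window e"
  shows "Z_solution v e = mean_increment e"
proof -
  define D where "D = window_vec (\<lambda>e. Z_solution v e - mean_increment e)"
  have "D \<in> carrier_vec M" unfolding D_def by simp
  moreover have "Acc N *\<^sub>v D = 0\<^sub>v R"
    unfolding D_def window_vec_diff using accordion_Z_solution[OF v] accordion_mean_increment
    by (subst mult_minus_distrib_mat_vec[OF accordion_carrier]) auto
  moreover have "char_op k p q (window_fun D) i = 0" if i: "0 < i" "i < int N" for i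
proof -
    have "char_op k p q (window_fun D) i = char_op k p q (\<lambda>e. Z_solution v e - mean_increment e) i"
      by (rule char_op_window_cong[OF i]) (simp add: D_def window_fun_window_vec)
    then show ?thesis by (simp add: char_op_diff char_op_Z_solution char_op_mean_increment[OF i])
  qed
  ultimately have "D = 0\<^sub>v M" by (rule window_vec_eq_0)
  then have "window_fun D e = window_fun (window_vec (\<lambda>_. 0)) e"
    by (simp add: window_vec_def zero_vec_def)
  then have "window_fun D e = 0" using window_fun_window_vec[OF e] by simp
  then show ?thesis using e unfolding D_def by (simp add: window_fun_window_vec)
qed

lemma sum_Z_solution_eq_mean_time:
  assumes v: "v \<in> carrier_vec R" "B *\<^sub>v v = - (Acc N *\<^sub>v window_vec delta)" and i: "i \<le> N"
  shows "(\<Sum>s<i. Z_solution v (int s + 1)) = complex_of_real (mean_time i)"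
proof -
  have "(\<Sum>s<i. Z_solution v (int s + 1))
      = (\<Sum>s<i. complex_of_real (mean_time (clampN N (int (Suc s)))) - complex_of_real (mean_time (clampN N (int s))))"
  proof (intro sum.cong refl)
    fix s assume "s \<in> {..<i}"
    then have "in_window (int s + 1)" unfolding in_window_def using i kp_facts(1) kq_facts(1) by auto
    then show "Z_solution v (int s + 1) = complex_of_real (mean_time (clampN N (int (Suc s))))
        - complex_of_real (mean_time (clampN N (int s)))"
      using Z_solution_eq_mean_increment[OF v] unfolding mean_increment_def by (simp add: add.commute)
  qed
  also have "\<dots> = complex_of_real (mean_time i)"
    using i by (subst sum_lessThan_telescope) (simp add: clampN_simps mean_time_boundary)
  finally show ?thesis .
qed

end

context random_leap_roots begin

definition column_op :: "complex vec \<Rightarrow> complex mat" where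
  "column_op v = four_block_mat (1\<^sub>m R) (mat R 1 (\<lambda>(a, _). v $ a)) (0\<^sub>m 1 R) (1\<^sub>m 1)"

lemma column_op_carrier: "column_op v \<in> carrier_mat (R + 1) (R + 1)"
  unfolding column_op_def by (rule four_block_carrier_mat) auto

lemma det_column_op: "det (column_op v) = 1"
  unfolding column_op_def by (subst det_four_block_mat_lower_left_zero[of _ R _ 1]) auto

lemma column_op_index: "a < R + 1 \<Longrightarrow> b < R + 1 \<Longrightarrow> column_op v $$ (a, b) =
   (if a < R then (if b < R then (if a = b then 1 else 0) else v $ a) else (if b < R then 0 else 1))"
  unfolding column_op_def by (simp add: index_mat_four_block)

definition Zsol_mat :: "complex vec \<Rightarrow> complex mat" where
  "Zsol_mat v = mat M (R + 1) (\<lambda>(x, b). if b < R then Zm $$ (x, b) else Z_solution v (int x + 2 - int Q))"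

lemma col_Zsol_mat:
  "b < R + 1 \<Longrightarrow> col (Zsol_mat v) b = (if b < R then col Zm b else window_vec (Z_solution v))"
  unfolding Zsol_mat_def window_vec_def using Zmat_carrier by (intro eq_vecI) auto

abbreviation "Zs \<equiv> Zstar N R Q (chi k p q) zs (drift k p q) (variance_xi k p q)"

lemma Zstar_carrier: "Zs \<in> carrier_mat M (R + 1)"
  unfolding Zstar_def using length_Z_cols window_size by simp

lemma Zstar_index: "x < M \<Longrightarrow> b < R + 1 \<Longrightarrow>
    Zs $$ (x, b) = (if b < R then Zm $$ (x, b) else delta (int x + 2 - int Q))"
  unfolding Zstar_def using length_Z_cols window_size by simp

lemmas Zstar_index_simplified = Zstar_index[simplified]

lemma Zstar_mult_column_op: "Zs * column_op v = Zsol_mat v"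
proof (rule eq_matI)
  show "dim_row (Zs * column_op v) = dim_row (Zsol_mat v)" "dim_col (Zs * column_op v) = dim_col (Zsol_mat v)"
    using Zstar_carrier column_op_carrier unfolding Zsol_mat_def by auto
  fix x b assume "x < dim_row (Zsol_mat v)" "b < dim_col (Zsol_mat v)"
  then have x: "x < M" and b: "b < R + 1" unfolding Zsol_mat_def by auto
  have "dim_row Zs = M" "dim_col Zs = R + 1" "dim_col (column_op v) = R + 1" "dim_row (column_op v) = R + 1"
    using Zstar_carrier column_op_carrier by auto
  then have "(Zs * column_op v) $$ (x, b) = (\<Sum>a\<in>{0..<R + 1}. Zs $$ (x, a) * column_op v $$ (a, b))"
    using x b by (simp add: scalar_prod_def)
  also have "\<dots> = (\<Sum>a<R. Zs $$ (x, a) * column_op v $$ (a, b)) + Zs $$ (x, R) * column_op v $$ (R, b)"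
    by (simp add: lessThan_atLeast0[symmetric])
  also have "\<dots> = Zsol_mat v $$ (x, b)"
  proof (cases "b < R")
    case True
    have "(\<Sum>a<R. Zs $$ (x, a) * column_op v $$ (a, b)) = (\<Sum>a<R. if a = b then Zs $$ (x, a) else 0)"
      using b True by (intro sum.cong refl) (auto simp: column_op_index)
    then show ?thesis using True x b by (simp add: column_op_index Zstar_index_simplified Zsol_mat_def)
  next
    case False
    then have bR: "b = R" using b by simp
    have "(\<Sum>a<R. Zs $$ (x, a) * column_op v $$ (a, b)) = (\<Sum>a<R. v $ a * Zcol a (int x + 2 - int Q))"
      using bR x by (intro sum.cong refl)
        (auto simp: column_op_index Zstar_index_simplified Zmat_index_simplified mult.commute)
    then show ?thesis using bR x by (simp add: column_op_index Zstar_index_simplified Zsol_mat_def Z_solution_def)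
  qed
  finally show "(Zs * column_op v) $$ (x, b) = Zsol_mat v $$ (x, b)" .
qed

abbreviation "Ae i \<equiv> accordion_ext N P Q i"

lemma accordion_ext_carrier: "Ae i \<in> carrier_mat (R + 1) M"
  unfolding accordion_ext_def using kp_facts(1) kq_facts(1) by simp

lemma row_accordion_ext:
  "a < R + 1 \<Longrightarrow> row (Ae i) a = (if a < R then row (Acc N) a else row (Acc i) (Q - 1))"
  unfolding accordion_ext_def using kp_facts(1) kq_facts(1) by (intro eq_vecI) auto

lemma accordion_ext_mult_Zsol_mat:
  assumes v: "v \<in> carrier_vec R" "B *\<^sub>v v = - (Acc N *\<^sub>v window_vec delta)" and i: "i \<le> N"
  shows "Ae i * Zsol_mat v = four_block_mat B (0\<^sub>m R 1)
    (mat 1 R (\<lambda>(_, b). (Acc i * Zm) $$ (Q - 1, b))) (mat 1 1 (\<lambda>_. complex_of_real (mean_time i)))"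
    (is "_ = ?T")
proof (rule eq_matI)
  have Q1: "Q - 1 < R" using kp_facts(1) kq_facts(1) by simp
  fix a b assume "a < dim_row ?T" "b < dim_col ?T"
  then have a: "a < R + 1" and b: "b < R + 1" using B_carrier by auto
  have "dim_row (Ae i) = R + 1" "dim_col (Zsol_mat v) = R + 1"
    using accordion_ext_carrier[of i] unfolding Zsol_mat_def by auto
  then have "(Ae i * Zsol_mat v) $$ (a, b) = row (Ae i) a \<bullet> col (Zsol_mat v) b"
    using a b by (simp only: index_mult_mat)
  also have "\<dots> = ?T $$ (a, b)"
proof -
    have T: "?T $$ (a, b) = (if a < R then (if b < R then B $$ (a, b) else 0)
        else (if b < R then (Acc i * Zm) $$ (Q - 1, b) else complex_of_real (mean_time i)))"
    proof -
      have "dim_row B = R" "dim_col B = R" using B_carrier by auto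
      then show ?thesis using a b by (auto simp: index_mat_four_block(1))
    qed
    consider "a < R" "b < R" | "a < R" "b = R" | "a = R" "b < R" | "a = R" "b = R"
      using a b by linarith
    then show ?thesis
    proof cases
      case 1
      then show ?thesis using Zmat_carrier T by (simp add: row_accordion_ext col_Zsol_mat)
    next
      case 2
      then have "row (Acc N) a \<bullet> window_vec (Z_solution v) = (Acc N *\<^sub>v window_vec (Z_solution v)) $ a"
        by simp
      then show ?thesis using 2 T accordion_Z_solution[OF v] by (simp add: row_accordion_ext col_Zsol_mat)
    next
      case 3
      then show ?thesis using Zmat_carrier T Q1 by (simp add: row_accordion_ext col_Zsol_mat)
    next
      case 4
      then have "row (Acc i) (Q - 1) \<bullet> window_vec (Z_solution v) = (Acc i *\<^sub>v window_vec (Z_solution v)) $ (Q - 1)"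
        using Q1 by simp
      then show ?thesis using 4 T accordion_mult_window_vec[OF i Q1] sum_Z_solution_eq_mean_time[OF v i]
        by (simp add: row_accordion_ext col_Zsol_mat)
    qed
  qed
  finally show "(Ae i * Zsol_mat v) $$ (a, b) = ?T $$ (a, b)" .
qed (use accordion_ext_carrier B_carrier in \<open>auto simp: Zsol_mat_def\<close>)

lemma det_accordion_ext_Zstar:
  assumes i: "i \<le> N"
  shows "det (Ae i * Zs) = det B * complex_of_real (mean_time i)"
proof -
  obtain v where v: "v \<in> carrier_vec R" "B *\<^sub>v v = - (Acc N *\<^sub>v window_vec delta)"
    using accordion_Zmat_solvable mult_mat_vec_carrier[OF accordion_carrier window_vec_carrier]
    by (metis uminus_carrier_vec)
  have "det (Ae i * Zs) = det (Ae i * Zs * column_op v)"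
    using det_mult[OF mult_carrier_mat[OF accordion_ext_carrier Zstar_carrier] column_op_carrier]
    by (simp add: det_column_op)
  also have "Ae i * Zs * column_op v = Ae i * (Zs * column_op v)"
    by (rule assoc_mult_mat[OF accordion_ext_carrier Zstar_carrier column_op_carrier])
  also have "\<dots> = Ae i * Zsol_mat v"
    unfolding Zstar_mult_column_op ..
  also have "det \<dots> = det B * complex_of_real (mean_time i)"
    unfolding accordion_ext_mult_Zsol_mat[OF v i]
    by (subst det_four_block_mat_upper_right_zero_col[OF B_carrier refl]) (auto simp: det_single)
  finally show ?thesis .
qed

end

theorem mainTheorem3:
  fixes k N :: nat and p q :: "nat \<Rightarrow> real" and zs :: "complex list"
  assumes "k \<ge> 1"
    and "\<And>j. 1 \<le> j \<Longrightarrow> j \<le> k \<Longrightarrow> p j \<ge> 0"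
    and "\<And>j. 1 \<le> j \<Longrightarrow> j \<le> k \<Longrightarrow> q j \<ge> 0"
    and "(\<Sum>j = 1..k. p j + q j) = 1"
    and "(\<Sum>j = 1..k. p j) > 0"
    and "(\<Sum>j = 1..k. q j) > 0"
    and "N \<ge> kp k p + kq k q"
    and "distinct zs"
    and "set zs = {z. z \<noteq> 0 \<and> poly (chi k p q) z = 0}"
    and "i \<le> N"
  shows "det (accordion N (kp k p) (kq k q) N *
               Zmat N (kp k p + kq k q - 1) (kq k q) (chi k p q) zs) \<noteq> 0
    \<and> expected_absorption k p q N i \<noteq> \<infinity>
    \<and> complex_of_real (enn2real (expected_absorption k p q N i)) =
        det (accordion_ext N (kp k p) (kq k q) i *
             Zstar N (kp k p + kq k q - 1) (kq k q) (chi k p q) zs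
                   (drift k p q) (variance_xi k p q))
      / det (accordion N (kp k p) (kq k q) N *
             Zmat N (kp k p + kq k q - 1) (kq k q) (chi k p q) zs)"
proof -
  interpret random_leap_roots k p q N zs
    by unfold_locales (use assms in auto)
  have "expected_absorption k p q N i = ennreal (mean_time i)"
    by (rule expected_absorption_eq_mean_time[OF \<open>i \<le> N\<close>])
  moreover have "0 \<le> mean_time i"
    by (rule mean_time_nonneg[OF \<open>i \<le> N\<close>])
  moreover have "det (accordion_ext N P Q i * Zs) = det B * complex_of_real (mean_time i)"
    by (rule det_accordion_ext_Zstar[OF \<open>i \<le> N\<close>])
  ultimately show ?thesis
    using det_accordion_Zmat_nonzero by simp
qed

end
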